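(* Let $\mathbf Q=\mathbf Q_n$ be symmetric $n\times n$ matrices with zero diagonal and $\sup_n\|\mathbf Q_n\|_{\rm op}<\infty$, and let $\beta>0$ satisfy $\liminf_{n\to\infty}\frac1n\log\big(2^{-n}Z(\beta,\mathbf Q,\mathbf0)\big)>0$. For $\boldsymbol\sigma\in\{-1,1\}^n$ set $m_i(\boldsymbol\sigma):=\sum_j\mathbf Q_{ij}\sigma_j$ and let $\hat\beta_n$ be the maximum pseudo-likelihood estimator of $\beta$ under the working model $\boldsymbol\mu=\mathbf0$, i.e. a solution $b$ of $S_{\boldsymbol\sigma}(b)=0$ where $S_{\boldsymbol\sigma}(b):=\frac1n\sum_{i=1}^nm_i(\boldsymbol\sigma)\big(\sigma_i-\tanh(b\,m_i(\boldsymbol\sigma))\big)$. Let $s_n=o(n)$. Then $\hat\beta_n\to\beta$ in probability uniformly over $\boldsymbol\mu\in[0,\infty)^n$ with $|\mathrm{supp}(\boldsymbol\mu)|\le s_n$: for every $\eta>0$, $\sup_{\boldsymbol\mu}\mathbb P_{\beta,\mathbf Q,\boldsymbol\mu}(|\hat\beta_n-\beta|>\eta)\to0$. The same conclusion holds if, in addition, the spins on a set $S_1\subset[n]$ with $|S_1|=o(n)$ are fixed to $+1$.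
   Context: Ising model: $\mathbb P_{\beta,\mathbf Q,\boldsymbol\mu}(\boldsymbol\sigma)=Z(\beta,\mathbf Q,\boldsymbol\mu)^{-1}\exp(\frac\beta2\boldsymbol\sigma^\top\mathbf Q\boldsymbol\sigma+\boldsymbol\mu^\top\boldsymbol\sigma)$ for $\boldsymbol\sigma\in\{-1,1\}^n$. $\|\cdot\|_{\rm op}$ is the spectral (operator) norm. *)

theory Defs
  imports "HOL-Analysis.Analysis"
begin

text \<open>Matrices of size n are represented as functions nat => nat => real, only the
  entries with indices below n being relevant; vectors likewise as nat => real.\<close>

definition mat_opnorm :: "nat \<Rightarrow> (nat \<Rightarrow> nat \<Rightarrow> real) \<Rightarrow> real" where
  "mat_opnorm n A = Sup {sqrt (\<Sum>i<n. (\<Sum>j<n. A i j * x j)\<^sup>2) | x. (\<Sum>j<n. (x j)\<^sup>2) \<le> 1}"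

definition spin_configs :: "nat \<Rightarrow> nat set \<Rightarrow> (nat \<Rightarrow> real) set" where
  "spin_configs n F = {\<sigma> \<in> PiE {0..<n} (\<lambda>_. {-1, 1}). \<forall>i\<in>F. \<sigma> i = 1}"

definition ising_weight ::
  "nat \<Rightarrow> real \<Rightarrow> (nat \<Rightarrow> nat \<Rightarrow> real) \<Rightarrow> (nat \<Rightarrow> real) \<Rightarrow> (nat \<Rightarrow> real) \<Rightarrow> real" where
  "ising_weight n \<beta> Q \<mu> \<sigma> =
     exp (\<beta> / 2 * (\<Sum>i<n. \<Sum>j<n. \<sigma> i * Q i j * \<sigma> j) + (\<Sum>i<n. \<mu> i * \<sigma> i))"

definition ising_Z :: "nat \<Rightarrow> real \<Rightarrow> (nat \<Rightarrow> nat \<Rightarrow> real) \<Rightarrow> (nat \<Rightarrow> real) \<Rightarrow> real" where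
  "ising_Z n \<beta> Q \<mu> = (\<Sum>\<sigma>\<in>spin_configs n {}. ising_weight n \<beta> Q \<mu> \<sigma>)"

text \<open>Probability of an event A under the Ising model P_{beta,Q,mu} on {-1,1}^n,
  conditioned on (i.e. restricted to) the spins in F being +1; F = {} is the plain model.\<close>
definition ising_prob ::
  "nat \<Rightarrow> real \<Rightarrow> (nat \<Rightarrow> nat \<Rightarrow> real) \<Rightarrow> (nat \<Rightarrow> real) \<Rightarrow> nat set \<Rightarrow> (nat \<Rightarrow> real) set \<Rightarrow> real" where
  "ising_prob n \<beta> Q \<mu> F A =
     (\<Sum>\<sigma>\<in>spin_configs n F \<inter> A. ising_weight n \<beta> Q \<mu> \<sigma>) /
     (\<Sum>\<sigma>\<in>spin_configs n F. ising_weight n \<beta> Q \<mu> \<sigma>)"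

definition local_field :: "nat \<Rightarrow> (nat \<Rightarrow> nat \<Rightarrow> real) \<Rightarrow> (nat \<Rightarrow> real) \<Rightarrow> nat \<Rightarrow> real" where
  "local_field n Q \<sigma> i = (\<Sum>j<n. Q i j * \<sigma> j)"

definition pl_score :: "nat \<Rightarrow> (nat \<Rightarrow> nat \<Rightarrow> real) \<Rightarrow> (nat \<Rightarrow> real) \<Rightarrow> real \<Rightarrow> real" where
  "pl_score n Q \<sigma> b =
     (1 / real n) * (\<Sum>i<n. local_field n Q \<sigma> i * (\<sigma> i - tanh (b * local_field n Q \<sigma> i)))"

definition sparse_fields :: "nat \<Rightarrow> nat \<Rightarrow> (nat \<Rightarrow> real) set" where
  "sparse_fields n s = {\<mu>. (\<forall>i<n. \<mu> i \<ge> 0) \<and> card {i. i < n \<and> \<mu> i \<noteq> 0} \<le> s}"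

end

theory Submission
  imports Defs "HOL-Real_Asymp.Real_Asymp"
begin

text \<open>On configurations whose energy \<open>\<sigma>\<^sup>T Q \<sigma>\<close> is at least \<open>\<delta> n\<close> the local fields satisfy
  \<open>\<Sum>\<^sub>i |m\<^sub>i| \<ge> \<delta> n\<close>; since \<open>b \<mapsto> S\<^sub>\<sigma>(b)\<close> is decreasing with a slope controlled by these
  fields, \<open>S\<^sub>\<sigma>(\<beta> + \<eta>) < 0 < S\<^sub>\<sigma>(\<beta> - \<eta>)\<close> as soon as \<open>S\<^sub>\<sigma>(\<beta>) = o(1)\<close>, and then the estimate, a
  root of \<open>S\<^sub>\<sigma>\<close>, lies within \<open>\<eta>\<close> of \<open>\<beta>\<close>.
  Let \<open>U\<close> consist of the fixed spins and the support of \<open>\<mu>\<close>, so \<open>|U| = o(n)\<close>. The summands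
  \<open>m\<^sub>i (\<sigma>\<^sub>i - tanh (\<beta> m\<^sub>i))\<close> with \<open>i \<notin> U\<close> are centred given the other spins (flip \<open>\<sigma>\<^sub>i\<close>),
  so their sum has second moment \<open>O(n\<^sup>3\<^sup>/\<^sup>2)\<close> and is \<open>o(n)\<close> with high probability by
  Chebyshev's inequality; by Cauchy-Schwarz the summands in \<open>U\<close> contribute \<open>O(\<surd>(|U| n))\<close>.
  Low energy is exponentially unlikely: \<open>Z(\<beta>,Q,0) \<ge> 2\<^sup>n e\<^sup>c\<^sup>n\<close>, and overwriting the spins in
  \<open>U\<close> changes the energy by only \<open>O(\<surd>(|U| n))\<close>, so even conditionally on the spins in \<open>U\<close>
  the configurations of energy below \<open>\<delta> n = c n / \<beta>\<close> have probability at most \<open>e\<^sup>-\<^sup>c\<^sup>n\<^sup>/\<^sup>4\<close>.\<close>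

section \<open>Operator norm\<close>

lemma mat_opnorm_set_bdd_above:
  fixes A :: "nat \<Rightarrow> nat \<Rightarrow> real"
  shows "bdd_above {sqrt (\<Sum>i<n. (\<Sum>j<n. A i j * x j)\<^sup>2) | x. (\<Sum>j<n. (x j)\<^sup>2) \<le> 1}"
proof -
  define B where "B = sqrt (\<Sum>i<n. \<Sum>j<n. (A i j)\<^sup>2)"
  { fix x :: "nat \<Rightarrow> real" assume x: "(\<Sum>j<n. (x j)\<^sup>2) \<le> 1"
    have "\<And>i. (\<Sum>j<n. A i j * x j)\<^sup>2 \<le> (\<Sum>j<n. (A i j)\<^sup>2) * (\<Sum>j<n. (x j)\<^sup>2)"
      by (rule Cauchy_Schwarz_ineq_sum)
    also have "\<And>i. (\<Sum>j<n. (A i j)\<^sup>2) * (\<Sum>j<n. (x j)\<^sup>2) \<le> (\<Sum>j<n. (A i j)\<^sup>2)"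
      using x by (simp add: mult_left_le sum_nonneg)
    finally have "(\<Sum>i<n. (\<Sum>j<n. A i j * x j)\<^sup>2) \<le> (\<Sum>i<n. \<Sum>j<n. (A i j)\<^sup>2)"
      by (intro sum_mono)
    hence "sqrt (\<Sum>i<n. (\<Sum>j<n. A i j * x j)\<^sup>2) \<le> B" unfolding B_def
      using real_sqrt_le_mono by blast }
  thus ?thesis by (auto intro!: bdd_aboveI[where M=B])
qed

lemma mat_opnorm_leD:
  assumes "mat_opnorm n A \<le> C"
  shows "C \<ge> 0" "(\<Sum>i<n. (\<Sum>j<n. A i j * x j)\<^sup>2) \<le> C\<^sup>2 * (\<Sum>j<n. (x j)\<^sup>2)"
proof -
  let ?S = "{sqrt (\<Sum>i<n. (\<Sum>j<n. A i j * x j)\<^sup>2) | x. (\<Sum>j<n. (x j)\<^sup>2) \<le> 1}"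
  have unit_bound: "sqrt (\<Sum>i<n. (\<Sum>j<n. A i j * y j)\<^sup>2) \<le> C" if "(\<Sum>j<n. (y j)\<^sup>2) \<le> 1" for y
  proof -
    have "sqrt (\<Sum>i<n. (\<Sum>j<n. A i j * y j)\<^sup>2) \<le> Sup ?S"
      using that by (intro cSup_upper[OF _ mat_opnorm_set_bdd_above]) blast
    thus ?thesis using assms unfolding mat_opnorm_def by linarith
  qed
  from unit_bound[of "\<lambda>_. 0"] show C0: "C \<ge> 0" by simp
  define s where "s = (\<Sum>j<n. (x j)\<^sup>2)"
  have s0: "s \<ge> 0" unfolding s_def by (simp add: sum_nonneg)
  show "(\<Sum>i<n. (\<Sum>j<n. A i j * x j)\<^sup>2) \<le> C\<^sup>2 * (\<Sum>j<n. (x j)\<^sup>2)"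
  proof (cases "s = 0")
    case True
    hence "\<forall>j\<in>{..<n}. (x j)\<^sup>2 = 0" unfolding s_def
      by (subst sum_nonneg_eq_0_iff[symmetric]) auto
    hence "\<And>j. j < n \<Longrightarrow> x j = 0" by simp
    hence "\<And>i. (\<Sum>j<n. A i j * x j) = 0" by (intro sum.neutral) auto
    thus ?thesis by (simp add: sum_nonneg)
  next
    case False
    hence sp: "s > 0" using s0 by simp
    define y where "y j = x j / sqrt s" for j
    have "(\<Sum>j<n. (y j)\<^sup>2) = (\<Sum>j<n. (x j)\<^sup>2) / s"
      unfolding y_def using s0 by (simp add: power_divide sum_divide_distrib)
    hence "(\<Sum>j<n. (y j)\<^sup>2) \<le> 1" using sp unfolding s_def by simp
    from unit_bound[OF this] have "(\<Sum>i<n. (\<Sum>j<n. A i j * y j)\<^sup>2) \<le> C\<^sup>2"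
      using C0 by (metis real_le_rsqrt sqrt_le_D)
    moreover have "(\<Sum>i<n. (\<Sum>j<n. A i j * y j)\<^sup>2) = (\<Sum>i<n. (\<Sum>j<n. A i j * x j)\<^sup>2) / s"
    proof -
      have e: "\<And>i. (\<Sum>j<n. A i j * y j) = (\<Sum>j<n. A i j * x j) / sqrt s"
        unfolding y_def by (simp add: sum_divide_distrib)
      have "(\<Sum>i<n. (\<Sum>j<n. A i j * y j)\<^sup>2) = (\<Sum>i<n. (\<Sum>j<n. A i j * x j)\<^sup>2 / s)"
        using s0 by (intro sum.cong refl) (simp add: e power_divide)
      thus ?thesis by (simp add: sum_divide_distrib)
    qed
    ultimately show ?thesis using sp unfolding s_def[symmetric]
      by (simp add: divide_le_eq mult.commute)
  qed
qed

section \<open>Spin configurations and the Ising measure\<close>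

lemma finite_spin_configs: "finite (spin_configs n F)"
proof (rule finite_subset)
  show "spin_configs n F \<subseteq> PiE {0..<n} (\<lambda>_. {-1, 1::real})" unfolding spin_configs_def by auto
qed (intro finite_PiE; simp)

lemma spin_configs_values: "\<sigma> \<in> spin_configs n F \<Longrightarrow> i < n \<Longrightarrow> \<sigma> i \<in> {-1, 1}"
  unfolding spin_configs_def by (auto simp: PiE_def Pi_def)

lemma spin_configs_abs_le_1: "\<sigma> \<in> spin_configs n F \<Longrightarrow> i < n \<Longrightarrow> \<bar>\<sigma> i\<bar> \<le> 1"
  using spin_configs_values by fastforce

lemma spin_configs_flip:
  "\<sigma> \<in> spin_configs n F \<Longrightarrow> i < n \<Longrightarrow> i \<notin> F \<Longrightarrow> \<sigma>(i := - \<sigma> i) \<in> spin_configs n F"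
  unfolding spin_configs_def by (auto simp: PiE_def Pi_def extensional_def)

lemma ones_in_spin_configs:
  "F \<subseteq> {0..<n} \<Longrightarrow> (\<lambda>i. if i < n then 1 else undefined) \<in> spin_configs n F"
  unfolding spin_configs_def by (auto simp: PiE_def Pi_def extensional_def)

lemma card_spin_configs: "card (spin_configs n {}) = 2 ^ n"
proof -
  have "spin_configs n {} = PiE {0..<n} (\<lambda>_. {-1, 1::real})" unfolding spin_configs_def by auto
  thus ?thesis by (simp add: card_PiE numeral_2_eq_2)
qed

lemma ising_weight_pos: "ising_weight n \<beta> Q \<mu> \<sigma> > 0"
  unfolding ising_weight_def by simp

lemma ising_Z_pos: "ising_Z n \<beta> Q \<mu> > 0"
  unfolding ising_Z_def using finite_spin_configs ones_in_spin_configs[of "{}" n]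
  by (intro sum_pos ising_weight_pos) auto

lemma ising_prob_nonneg: "ising_prob n \<beta> Q \<mu> F A \<ge> 0"
  unfolding ising_prob_def
  by (intro divide_nonneg_nonneg sum_nonneg less_imp_le[OF ising_weight_pos])

lemma ising_prob_le_1: "ising_prob n \<beta> Q \<mu> F A \<le> 1"
proof -
  have "(\<Sum>\<sigma>\<in>spin_configs n F \<inter> A. ising_weight n \<beta> Q \<mu> \<sigma>)
      \<le> (\<Sum>\<sigma>\<in>spin_configs n F. ising_weight n \<beta> Q \<mu> \<sigma>)"
    by (intro sum_mono2 finite_spin_configs less_imp_le[OF ising_weight_pos]) auto
  moreover have "0 \<le> (\<Sum>\<sigma>\<in>spin_configs n F. ising_weight n \<beta> Q \<mu> \<sigma>)"
    by (intro sum_nonneg less_imp_le[OF ising_weight_pos])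
  ultimately show ?thesis unfolding ising_prob_def by (auto simp: divide_le_eq_1)
qed

lemma zero_in_sparse_fields: "(\<lambda>_. 0) \<in> sparse_fields n s"
  unfolding sparse_fields_def by simp

lemma weighted_chebyshev:
  fixes w g :: "'a \<Rightarrow> real"
  assumes "finite A" "\<And>x. 0 \<le> w x" "t > 0"
  shows "(\<Sum>x\<in>A \<inter> {x. \<bar>g x\<bar> > t}. w x) \<le> (\<Sum>x\<in>A. w x * (g x)\<^sup>2) / t\<^sup>2"
proof -
  have "(\<Sum>x\<in>A \<inter> {x. \<bar>g x\<bar> > t}. w x) \<le> (\<Sum>x\<in>A \<inter> {x. \<bar>g x\<bar> > t}. w x * (g x)\<^sup>2 / t\<^sup>2)"
  proof (intro sum_mono)
    fix x assume "x \<in> A \<inter> {x. \<bar>g x\<bar> > t}"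
    hence "t\<^sup>2 \<le> (g x)\<^sup>2"
      using assms(3) by (metis abs_le_square_iff abs_of_pos less_imp_le IntD2 mem_Collect_eq)
    hence "1 \<le> (g x)\<^sup>2 / t\<^sup>2" using assms(3) by simp
    from mult_left_mono[OF this assms(2)] show "w x \<le> w x * (g x)\<^sup>2 / t\<^sup>2" by simp
  qed
  also have "\<dots> \<le> (\<Sum>x\<in>A. w x * (g x)\<^sup>2 / t\<^sup>2)"
    using assms by (intro sum_mono2) auto
  finally show ?thesis by (simp add: sum_divide_distrib)
qed

lemma ising_prob_mono:
  assumes "spin_configs n F \<inter> A \<subseteq> B"
  shows "ising_prob n \<beta> Q \<mu> F A \<le> ising_prob n \<beta> Q \<mu> F B"
proof -
  have "(\<Sum>\<sigma>\<in>spin_configs n F \<inter> A. ising_weight n \<beta> Q \<mu> \<sigma>)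
      \<le> (\<Sum>\<sigma>\<in>spin_configs n F \<inter> B. ising_weight n \<beta> Q \<mu> \<sigma>)"
    using assms finite_spin_configs by (intro sum_mono2 less_imp_le[OF ising_weight_pos]) auto
  thus ?thesis unfolding ising_prob_def
    by (intro divide_right_mono sum_nonneg less_imp_le[OF ising_weight_pos])
qed

lemma ising_prob_Un_le:
  "ising_prob n \<beta> Q \<mu> F (A \<union> B) \<le> ising_prob n \<beta> Q \<mu> F A + ising_prob n \<beta> Q \<mu> F B"
proof -
  let ?w = "ising_weight n \<beta> Q \<mu>" and ?SC = "spin_configs n F"
  have "(\<Sum>\<sigma>\<in>?SC \<inter> (A \<union> B). ?w \<sigma>) = (\<Sum>\<sigma>\<in>(?SC \<inter> A) \<union> (?SC \<inter> B). ?w \<sigma>)"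
    by (simp add: Int_Un_distrib)
  also have "\<dots> \<le> (\<Sum>\<sigma>\<in>?SC \<inter> A. ?w \<sigma>) + (\<Sum>\<sigma>\<in>?SC \<inter> B. ?w \<sigma>)"
    using sum_Un[of "?SC \<inter> A" "?SC \<inter> B" ?w] finite_spin_configs
      sum_nonneg[of "?SC \<inter> A \<inter> (?SC \<inter> B)" ?w] less_imp_le[OF ising_weight_pos]
    by auto
  finally show ?thesis
    unfolding ising_prob_def add_divide_distrib[symmetric]
    by (intro divide_right_mono sum_nonneg less_imp_le[OF ising_weight_pos])
qed

lemma ising_prob_le_of_weight_le:
  assumes "F \<subseteq> {..<n}"
    and "(\<Sum>\<sigma>\<in>spin_configs n F \<inter> A. ising_weight n \<beta> Q \<mu> \<sigma>)
      \<le> R * (\<Sum>\<sigma>\<in>spin_configs n F. ising_weight n \<beta> Q \<mu> \<sigma>)"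
  shows "ising_prob n \<beta> Q \<mu> F A \<le> R"
proof -
  have "(\<Sum>\<sigma>\<in>spin_configs n F. ising_weight n \<beta> Q \<mu> \<sigma>) > 0"
    using assms(1) ones_in_spin_configs[of F n]
    by (intro sum_pos finite_spin_configs ising_weight_pos) (auto simp: atLeast0LessThan)
  thus ?thesis using assms(2) unfolding ising_prob_def by (simp add: divide_le_eq)
qed

definition restrict_spins :: "nat set \<Rightarrow> (nat \<Rightarrow> real) \<Rightarrow> nat \<Rightarrow> real" where
  "restrict_spins U \<sigma> = (\<lambda>i. if i \<in> U then \<sigma> i else 0)"

definition spin_fibre :: "nat \<Rightarrow> nat set \<Rightarrow> (nat \<Rightarrow> real) \<Rightarrow> (nat \<Rightarrow> real) set" where
  "spin_fibre n U \<tau> = {\<sigma> \<in> spin_configs n {}. restrict_spins U \<sigma> = \<tau>}"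

definition overwrite_spins :: "nat set \<Rightarrow> (nat \<Rightarrow> real) \<Rightarrow> (nat \<Rightarrow> real) \<Rightarrow> nat \<Rightarrow> real" where
  "overwrite_spins U \<tau> \<sigma> = (\<lambda>i. if i \<in> U then \<tau> i else \<sigma> i)"

lemma finite_spin_fibre: "finite (spin_fibre n U \<tau>)"
  unfolding spin_fibre_def using finite_spin_configs by simp

lemma sum_spin_fibres:
  "(\<Sum>\<tau>\<in>restrict_spins U ` spin_configs n {}. \<Sum>\<sigma>\<in>spin_fibre n U \<tau>. f \<sigma>)
    = (\<Sum>\<sigma>\<in>spin_configs n {}. f \<sigma>)"
  unfolding spin_fibre_def by (rule sum.group) (auto simp: finite_spin_configs)

lemma overwrite_spins_in_fibre:
  assumes "U \<subseteq> {..<n}" "\<tau> \<in> restrict_spins U ` spin_configs n {}" "\<sigma> \<in> spin_configs n {}"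
  shows "overwrite_spins U \<tau> \<sigma> \<in> spin_fibre n U \<tau>"
proof -
  obtain \<sigma>0 where "\<sigma>0 \<in> spin_configs n {}" and \<tau>: "\<tau> = restrict_spins U \<sigma>0"
    using assms(2) by auto
  moreover have "overwrite_spins U \<tau> \<sigma> = (\<lambda>i. if i \<in> U then \<sigma>0 i else \<sigma> i)"
    unfolding overwrite_spins_def \<tau> restrict_spins_def by auto
  ultimately show ?thesis using assms(1,3)
    unfolding spin_fibre_def spin_configs_def restrict_spins_def
    by (auto simp: PiE_def Pi_def extensional_def)
qed

lemma inj_on_overwrite_spins: "inj_on (overwrite_spins U \<tau>) (spin_fibre n U \<tau>')"
proof (rule inj_onI)
  fix \<sigma> \<sigma>' assume "\<sigma> \<in> spin_fibre n U \<tau>'" "\<sigma>' \<in> spin_fibre n U \<tau>'"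
    and eq: "overwrite_spins U \<tau> \<sigma> = overwrite_spins U \<tau> \<sigma>'"
  hence restr: "restrict_spins U \<sigma> = restrict_spins U \<sigma>'" unfolding spin_fibre_def by auto
  show "\<sigma> = \<sigma>'"
  proof
    fix i show "\<sigma> i = \<sigma>' i"
      using fun_cong[OF restr, of i] fun_cong[OF eq, of i]
      unfolding restrict_spins_def overwrite_spins_def by (cases "i \<in> U") auto
  qed
qed

lemma overwrite_spins_image_fibre:
  "U \<subseteq> {..<n} \<Longrightarrow> \<tau> \<in> restrict_spins U ` spin_configs n {} \<Longrightarrow>
    overwrite_spins U \<tau> ` spin_fibre n U \<tau>' \<subseteq> spin_fibre n U \<tau>"
  using overwrite_spins_in_fibre unfolding spin_fibre_def by blast

lemma card_spin_fibre_eq: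
  assumes U: "U \<subseteq> {..<n}" and "\<tau> \<in> restrict_spins U ` spin_configs n {}"
    and "\<tau>' \<in> restrict_spins U ` spin_configs n {}"
  shows "card (spin_fibre n U \<tau>') = card (spin_fibre n U \<tau>)"
  using card_inj_on_le[OF inj_on_overwrite_spins overwrite_spins_image_fibre[OF U] finite_spin_fibre]
    assms(2,3) by (meson le_antisym)

lemma card_spin_fibre:
  assumes U: "U \<subseteq> {..<n}" and \<tau>: "\<tau> \<in> restrict_spins U ` spin_configs n {}"
  shows "real (2 ^ n) = card (restrict_spins U ` spin_configs n {}) * real (card (spin_fibre n U \<tau>))"
proof -
  have "real (2 ^ n) = (\<Sum>\<sigma>\<in>spin_configs n {}. 1)" using card_spin_configs[of n] by simp
  also have "\<dots> = (\<Sum>\<tau>'\<in>restrict_spins U ` spin_configs n {}. \<Sum>\<sigma>\<in>spin_fibre n U \<tau>'. 1)"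
    by (rule sum_spin_fibres[symmetric])
  also have "\<dots> = (\<Sum>\<tau>'\<in>restrict_spins U ` spin_configs n {}. real (card (spin_fibre n U \<tau>)))"
    using card_spin_fibre_eq[OF U \<tau>] by (intro sum.cong) auto
  finally show ?thesis by simp
qed

lemma spin_fibre_fixed:
  assumes "F \<subseteq> U" "\<tau> \<in> restrict_spins U ` spin_configs n F"
  shows "{\<sigma> \<in> spin_configs n F. restrict_spins U \<sigma> = \<tau>} = spin_fibre n U \<tau>"
proof -
  obtain \<sigma>0 where \<sigma>0: "\<sigma>0 \<in> spin_configs n F" and \<tau>: "\<tau> = restrict_spins U \<sigma>0"
    using assms(2) by auto
  have "\<sigma> \<in> spin_configs n F" if "\<sigma> \<in> spin_fibre n U \<tau>" for \<sigma>
  proof -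
    have "\<sigma> i = \<sigma>0 i" if "i \<in> F" for i
    proof -
      have "restrict_spins U \<sigma> i = restrict_spins U \<sigma>0 i"
        using \<open>\<sigma> \<in> spin_fibre n U \<tau>\<close> unfolding \<tau> spin_fibre_def by auto
      thus ?thesis using that assms(1) unfolding restrict_spins_def by auto
    qed
    thus ?thesis using \<sigma>0 \<open>\<sigma> \<in> spin_fibre n U \<tau>\<close> unfolding spin_fibre_def spin_configs_def by auto
  qed
  moreover have "spin_configs n F \<subseteq> spin_configs n {}" unfolding spin_configs_def by auto
  ultimately show ?thesis unfolding spin_fibre_def by auto
qed

section \<open>The tanh score\<close>

lemma tanh_lipschitz: "\<bar>tanh a - tanh b\<bar> \<le> \<bar>a - (b::real)\<bar>"
proof -
  have ordered: "\<bar>tanh y - tanh x\<bar> \<le> y - x" if "x < y" for x y :: real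
  proof -
    have "\<And>z. (tanh has_real_derivative (1 - (tanh z)\<^sup>2)) (at z)"
      by (auto intro!: derivative_eq_intros)
    from MVT2[OF that this] obtain z where z: "tanh y - tanh x = (y - x) * (1 - (tanh z)\<^sup>2)"
      by blast
    have "\<bar>tanh z\<bar> < 1" using tanh_real_bounds[of z] by auto
    hence "0 \<le> 1 - (tanh z)\<^sup>2" "1 - (tanh z)\<^sup>2 \<le> 1" by (auto simp: abs_square_less_1 less_imp_le)
    thus ?thesis unfolding z using that by (simp add: abs_mult mult_left_le)
  qed
  show ?thesis
  proof (cases a b rule: linorder_cases)
    case less thus ?thesis using ordered[OF less] by (simp add: abs_minus_commute)
  next
    case greater thus ?thesis using ordered[OF greater] by simp
  qed simp
qed

text \<open>Flipping a spin \<open>s\<close> multiplies the Ising weight by \<open>exp (-2 s x)\<close>, with \<open>x = \<beta> m\<^sub>i\<close>;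
  this factor turns the residual \<open>s - tanh x\<close> into its negative.\<close>
lemma exp_tanh_flip:
  assumes "s \<in> {-1, 1::real}"
  shows "exp (- 2 * s * x) * (- s - tanh x) = - (s - tanh x)"
proof -
  have flip1: "exp (-2 * y) * (1 + tanh y) = 1 - tanh y" for y :: real
  proof -
    have "1 + exp (-2 * y) > 0" by (simp add: add_pos_pos)
    thus ?thesis unfolding tanh_real_altdef by (simp add: field_simps)
  qed
  show ?thesis
  proof (cases "s = 1")
    case True thus ?thesis using flip1[of x] by (simp add: algebra_simps)
  next
    case False
    hence s: "s = -1" using assms by auto
    have "exp (2 * x) * (1 - tanh x) = exp (2 * x) * (exp (-2 * x) * (1 + tanh x))"
      using flip1[of x] by simp
    also have "\<dots> = 1 + tanh x" by (simp add: exp_add[symmetric] mult.assoc[symmetric])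
    finally show ?thesis using s by (simp add: algebra_simps)
  qed
qed

lemma tanh_gap_uniform_pos:
  fixes b1 b2 a K :: real
  assumes b: "b1 < b2" and a: "0 < a"
  shows "\<exists>\<gamma>>0. \<forall>x. a \<le> x \<and> x \<le> K \<longrightarrow> \<gamma> \<le> tanh (b2 * x) - tanh (b1 * x)"
proof (cases "a \<le> K")
  case False thus ?thesis by (intro exI[of _ 1]) auto
next
  case True
  have "continuous_on {a..K} (\<lambda>x. tanh (b2 * x) - tanh (b1 * x))"
    by (intro continuous_intros) (auto simp: cosh_real_pos[THEN less_imp_neq, symmetric])
  from continuous_attains_inf[OF compact_Icc _ this] True
  obtain x0 where x0: "x0 \<in> {a..K}" and mn: "\<forall>y\<in>{a..K}. tanh (b2 * x0) - tanh (b1 * x0) \<le> tanh (b2 * y) - tanh (b1 * y)"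
    by auto
  have "b1 * x0 < b2 * x0" using x0 a b by (intro mult_strict_right_mono) auto
  hence "tanh (b2 * x0) - tanh (b1 * x0) > 0" by simp
  thus ?thesis using mn by (intro exI[of _ "tanh (b2 * x0) - tanh (b1 * x0)"]) auto
qed

lemma tanh_gap_two_sided:
  fixes \<beta> \<eta> a K :: real
  assumes "\<eta> > 0" "a > 0"
  obtains \<gamma> where "\<gamma> > 0"
    "\<forall>x. a \<le> x \<and> x \<le> K \<longrightarrow> \<gamma> \<le> tanh ((\<beta> + \<eta>) * x) - tanh (\<beta> * x)"
    "\<forall>x. a \<le> x \<and> x \<le> K \<longrightarrow> \<gamma> \<le> tanh (\<beta> * x) - tanh ((\<beta> - \<eta>) * x)"
proof -
  obtain \<gamma>1 where "\<gamma>1 > 0" and \<gamma>1: "\<forall>x. a \<le> x \<and> x \<le> K \<longrightarrow> \<gamma>1 \<le> tanh ((\<beta> + \<eta>) * x) - tanh (\<beta> * x)"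
    using tanh_gap_uniform_pos[of \<beta> "\<beta> + \<eta>" a K] assms by auto
  obtain \<gamma>2 where "\<gamma>2 > 0" and \<gamma>2: "\<forall>x. a \<le> x \<and> x \<le> K \<longrightarrow> \<gamma>2 \<le> tanh (\<beta> * x) - tanh ((\<beta> - \<eta>) * x)"
    using tanh_gap_uniform_pos[of "\<beta> - \<eta>" \<beta> a K] assms by auto
  show ?thesis
    using \<open>\<gamma>1 > 0\<close> \<open>\<gamma>2 > 0\<close> \<gamma>1 \<gamma>2 by (intro that[of "min \<gamma>1 \<gamma>2"]) force+
qed

lemma tanh_gap_term_abs:
  fixes m b1 b2 :: real
  shows "m * (tanh (b2 * m) - tanh (b1 * m)) = \<bar>m\<bar> * (tanh (b2 * \<bar>m\<bar>) - tanh (b1 * \<bar>m\<bar>))"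
proof (cases "m \<ge> 0")
  case True thus ?thesis by simp
next
  case False
  hence "\<bar>m\<bar> = - m" by simp
  thus ?thesis by (simp add: algebra_simps)
qed

lemma tanh_gap_term_nonneg:
  fixes m b1 b2 :: real
  assumes "b1 \<le> b2"
  shows "0 \<le> m * (tanh (b2 * m) - tanh (b1 * m))"
proof -
  have "b1 * \<bar>m\<bar> \<le> b2 * \<bar>m\<bar>" using assms by (intro mult_right_mono) auto
  thus ?thesis unfolding tanh_gap_term_abs[of m] by simp
qed

lemma tanh_gap_term_lower:
  fixes m b1 b2 a K \<gamma> :: real
  assumes b: "b1 \<le> b2" and g: "\<forall>x. a \<le> x \<and> x \<le> K \<longrightarrow> \<gamma> \<le> tanh (b2 * x) - tanh (b1 * x)" and g0: "\<gamma> \<ge> 0"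
  shows "\<gamma> * (if a \<le> \<bar>m\<bar> \<and> \<bar>m\<bar> \<le> K then \<bar>m\<bar> else 0) \<le> m * (tanh (b2 * m) - tanh (b1 * m))"
proof (cases "a \<le> \<bar>m\<bar> \<and> \<bar>m\<bar> \<le> K")
  case True
  hence "\<gamma> \<le> tanh (b2 * \<bar>m\<bar>) - tanh (b1 * \<bar>m\<bar>)" using g by auto
  hence "\<bar>m\<bar> * \<gamma> \<le> \<bar>m\<bar> * (tanh (b2 * \<bar>m\<bar>) - tanh (b1 * \<bar>m\<bar>))" by (intro mult_left_mono) auto
  thus ?thesis using True unfolding tanh_gap_term_abs[of m] by (simp add: mult.commute)
next
  case False
  hence "(if a \<le> \<bar>m\<bar> \<and> \<bar>m\<bar> \<le> K then \<bar>m\<bar> else 0) = 0" by (simp only: if_False)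
  thus ?thesis using tanh_gap_term_nonneg[OF b, of m] by simp
qed

lemma abs_le_window_split:
  fixes x a K :: real
  assumes "0 < K" "0 \<le> a"
  shows "\<bar>x\<bar> \<le> a + (if a \<le> \<bar>x\<bar> \<and> \<bar>x\<bar> \<le> K then \<bar>x\<bar> else 0) + x\<^sup>2 / K"
proof -
  have q: "x\<^sup>2 / K \<ge> 0" using assms by simp
  show ?thesis
  proof (cases "\<bar>x\<bar> < a")
    case True thus ?thesis using q by auto
  next
    case False
    show ?thesis
    proof (cases "\<bar>x\<bar> \<le> K")
      case True thus ?thesis using False q assms(2) by auto
    next
      case False2: False
      have "\<bar>x\<bar> * K \<le> \<bar>x\<bar> * \<bar>x\<bar>" using False2 by (intro mult_left_mono) auto
      hence "\<bar>x\<bar> \<le> x\<^sup>2 / K" using assms by (simp add: field_simps power2_eq_square)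
      thus ?thesis using False False2 assms(2) by auto
    qed
  qed
qed

text \<open>Sites with \<open>|m\<^sub>i| < \<delta>/2\<close> carry less than \<open>\<delta> n/2\<close> of \<open>\<Sum>\<^sub>i |m\<^sub>i|\<close>, and since
  \<open>\<Sum>\<^sub>i m\<^sub>i\<^sup>2 \<le> C\<^sup>2 n\<close> the sites with \<open>|m\<^sub>i| > 4C\<^sup>2/\<delta>\<close> carry at most \<open>\<delta> n/4\<close>; so at
  least \<open>\<delta> n/4\<close> lies in the window where the tanh gap is at least \<open>\<gamma>\<close>.\<close>
lemma sum_tanh_gap_lower:
  fixes m :: "nat \<Rightarrow> real" and b1 b2 \<gamma> \<delta> C :: real and n :: nat
  assumes b: "b1 \<le> b2" and d: "\<delta> > 0" and C: "C > 0"
    and g: "\<forall>x. \<delta> / 2 \<le> x \<and> x \<le> 4 * C\<^sup>2 / \<delta> \<longrightarrow> \<gamma> \<le> tanh (b2 * x) - tanh (b1 * x)" and g0: "\<gamma> \<ge> 0"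
    and M: "(\<Sum>i<n. (m i)\<^sup>2) \<le> C\<^sup>2 * n" and A: "(\<Sum>i<n. \<bar>m i\<bar>) \<ge> \<delta> * n"
  shows "(\<Sum>i<n. m i * (tanh (b2 * m i) - tanh (b1 * m i))) \<ge> \<gamma> * (\<delta> * n / 4)"
proof -
  define a where "a = \<delta> / 2"
  define K where "K = 4 * C\<^sup>2 / \<delta>"
  define ind where "ind x = (if a \<le> \<bar>x\<bar> \<and> \<bar>x\<bar> \<le> K then \<bar>x\<bar> else 0)" for x :: real
  have K0: "K > 0" unfolding K_def using d C by simp
  have "(\<Sum>i<n. \<bar>m i\<bar>) \<le> (\<Sum>i<n. a + ind (m i) + (m i)\<^sup>2 / K)"
    unfolding ind_def using K0 d unfolding a_def by (intro sum_mono abs_le_window_split) auto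
  also have "\<dots> = a * n + (\<Sum>i<n. ind (m i)) + (\<Sum>i<n. (m i)\<^sup>2) / K"
    by (simp add: sum.distrib sum_divide_distrib)
  also have "(\<Sum>i<n. (m i)\<^sup>2) / K \<le> C\<^sup>2 * n / K" using M K0 by (intro divide_right_mono) auto
  also have "C\<^sup>2 * n / K = \<delta> * n / 4" unfolding K_def using C d by (simp add: field_simps)
  finally have "(\<Sum>i<n. ind (m i)) \<ge> \<delta> * n / 4" using A unfolding a_def by linarith
  hence "\<gamma> * (\<delta> * n / 4) \<le> \<gamma> * (\<Sum>i<n. ind (m i))" using g0 by (intro mult_left_mono) auto
  also have "\<dots> = (\<Sum>i<n. \<gamma> * ind (m i))" by (simp add: sum_distrib_left)
  also have "\<dots> \<le> (\<Sum>i<n. m i * (tanh (b2 * m i) - tanh (b1 * m i)))"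
    unfolding ind_def using g unfolding a_def K_def by (intro sum_mono tanh_gap_term_lower[OF b _ g0]) auto
  finally show ?thesis .
qed

definition tanh_score :: "nat \<Rightarrow> (nat \<Rightarrow> real) \<Rightarrow> (nat \<Rightarrow> real) \<Rightarrow> real \<Rightarrow> real" where
  "tanh_score n m \<sigma> b = (\<Sum>i<n. m i * (\<sigma> i - tanh (b * m i)))"

lemma tanh_score_diff:
  "tanh_score n m \<sigma> b1 - tanh_score n m \<sigma> b2 = (\<Sum>i<n. m i * (tanh (b2 * m i) - tanh (b1 * m i)))"
  unfolding tanh_score_def by (simp add: sum_subtractf[symmetric] algebra_simps)

lemma tanh_score_antimono: "b1 \<le> b2 \<Longrightarrow> tanh_score n m \<sigma> b2 \<le> tanh_score n m \<sigma> b1"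
  using tanh_score_diff[of n m \<sigma> b1 b2] tanh_gap_term_nonneg[of b1 b2]
    sum_nonneg[of "{..<n}" "\<lambda>i. m i * (tanh (b2 * m i) - tanh (b1 * m i))"]
  by auto

lemma continuous_on_tanh_score: "continuous_on S (tanh_score n m \<sigma>)"
  unfolding tanh_score_def
  by (intro continuous_intros) (auto simp: cosh_real_pos[THEN less_imp_neq, symmetric])

lemma tanh_score_root_near:
  fixes bh \<beta> \<eta> :: real
  assumes neg: "tanh_score n m \<sigma> (\<beta> + \<eta>) < 0" and pos: "tanh_score n m \<sigma> (\<beta> - \<eta>) > 0"
    and eta: "\<eta> > 0"
    and bh: "(\<exists>b. tanh_score n m \<sigma> b = 0) \<Longrightarrow> tanh_score n m \<sigma> bh = 0"
  shows "\<bar>bh - \<beta>\<bar> < \<eta>"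
proof -
  have "\<exists>x. \<beta> - \<eta> \<le> x \<and> x \<le> \<beta> + \<eta> \<and> tanh_score n m \<sigma> x = 0"
    using neg pos eta by (intro IVT2' continuous_on_tanh_score) auto
  hence z: "tanh_score n m \<sigma> bh = 0" using bh by blast
  have "\<not> bh \<ge> \<beta> + \<eta>" using tanh_score_antimono[of "\<beta> + \<eta>" bh n m \<sigma>] z neg by auto
  moreover have "\<not> bh \<le> \<beta> - \<eta>" using tanh_score_antimono[of bh "\<beta> - \<eta>" n m \<sigma>] z pos by auto
  ultimately show ?thesis by auto
qed

lemma pl_score_tanh_score: "pl_score n Q \<sigma> b = (1 / real n) * tanh_score n (local_field n Q \<sigma>) \<sigma> b"
  unfolding pl_score_def tanh_score_def ..

section \<open>Ising models with a bounded coupling matrix\<close>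

locale bounded_coupling =
  fixes n :: nat and Q :: "nat \<Rightarrow> nat \<Rightarrow> real" and C :: real
  assumes symm: "\<And>i j. i < n \<Longrightarrow> j < n \<Longrightarrow> Q i j = Q j i"
    and diag: "\<And>i. i < n \<Longrightarrow> Q i i = 0"
    and opnorm_le: "mat_opnorm n Q \<le> C"
begin

abbreviation m where "m \<sigma> i \<equiv> local_field n Q \<sigma> i"

lemma C_nonneg: "C \<ge> 0"
  using mat_opnorm_leD(1)[OF opnorm_le] .

lemma sum_local_field_sq_le:
  assumes "\<And>j. j < n \<Longrightarrow> \<bar>\<sigma> j\<bar> \<le> 1"
  shows "(\<Sum>i<n. (m \<sigma> i)\<^sup>2) \<le> C\<^sup>2 * n"
proof -
  have "(\<Sum>j<n. (\<sigma> j)\<^sup>2) \<le> (\<Sum>j<n. 1)"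
    using assms by (intro sum_mono) (simp add: abs_square_le_1)
  hence "C\<^sup>2 * (\<Sum>j<n. (\<sigma> j)\<^sup>2) \<le> C\<^sup>2 * n" by (intro mult_left_mono) auto
  with mat_opnorm_leD(2)[OF opnorm_le, of \<sigma>] show ?thesis
    unfolding local_field_def by linarith
qed

lemma L2_local_field_le:
  assumes "\<And>j. j < n \<Longrightarrow> \<bar>\<sigma> j\<bar> \<le> 1"
  shows "sqrt (\<Sum>j<n. (m \<sigma> j)\<^sup>2) \<le> C * sqrt n"
proof -
  have "sqrt (\<Sum>j<n. (m \<sigma> j)\<^sup>2) \<le> sqrt (C\<^sup>2 * n)"
    using sum_local_field_sq_le[OF assms] by (rule real_sqrt_le_mono)
  also have "\<dots> = C * sqrt n" using C_nonneg by (simp add: real_sqrt_mult)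
  finally show ?thesis .
qed

lemma row_sum_sq_le:
  assumes "i < n"
  shows "(\<Sum>j<n. (Q i j)\<^sup>2) \<le> C\<^sup>2"
proof -
  define e where "e = (\<lambda>j. if j = i then 1 else (0::real))"
  have "(\<Sum>k<n. (\<Sum>j<n. Q k j * e j)\<^sup>2) \<le> C\<^sup>2 * (\<Sum>j<n. (e j)\<^sup>2)"
    by (rule mat_opnorm_leD(2)[OF opnorm_le])
  moreover have "(\<Sum>j<n. (e j)\<^sup>2) = (\<Sum>j<n. if j = i then 1 else 0)"
    by (intro sum.cong) (auto simp: e_def)
  moreover have "\<And>k. (\<Sum>j<n. Q k j * e j) = (\<Sum>j<n. if j = i then Q k i else 0)"
    by (intro sum.cong) (auto simp: e_def)
  moreover have "(\<Sum>k<n. (Q k i)\<^sup>2) = (\<Sum>j<n. (Q i j)\<^sup>2)"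
    using assms symm by (intro sum.cong) auto
  ultimately show ?thesis using assms by simp
qed

lemma L2_row_le: "i < n \<Longrightarrow> sqrt (\<Sum>j<n. (Q i j)\<^sup>2) \<le> C"
  using row_sum_sq_le C_nonneg by (auto simp: real_le_lsqrt)

lemma row_sum_abs_le:
  assumes "i < n"
  shows "(\<Sum>j<n. \<bar>Q i j\<bar>) \<le> sqrt n * C"
proof -
  have "(\<Sum>j<n. \<bar>1\<bar> * \<bar>Q i j\<bar>) \<le> sqrt (\<Sum>j<n. 1\<^sup>2) * sqrt (\<Sum>j<n. (Q i j)\<^sup>2)"
    by (rule L2_set_mult_ineq[unfolded L2_set_def])
  also have "\<dots> = sqrt n * sqrt (\<Sum>j<n. (Q i j)\<^sup>2)" by simp
  also have "\<dots> \<le> sqrt n * C"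
    using L2_row_le[OF assms] by (intro mult_left_mono) auto
  finally show ?thesis by simp
qed

lemma local_field_abs_le:
  assumes "i < n" "\<And>j. j < n \<Longrightarrow> \<bar>\<sigma> j\<bar> \<le> 1"
  shows "\<bar>m \<sigma> i\<bar> \<le> sqrt n * C"
proof -
  have "\<bar>m \<sigma> i\<bar> \<le> (\<Sum>j<n. \<bar>Q i j * \<sigma> j\<bar>)" unfolding local_field_def by (rule sum_abs)
  also have "\<dots> \<le> (\<Sum>j<n. \<bar>Q i j\<bar>)"
    using assms(2) by (intro sum_mono) (simp add: abs_mult mult_left_le)
  finally show ?thesis using row_sum_abs_le[OF assms(1)] by linarith
qed

lemma sum_abs_local_field_subset_le:
  assumes "U \<subseteq> {..<n}" "\<And>j. j < n \<Longrightarrow> \<bar>\<sigma> j\<bar> \<le> 1"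
  shows "(\<Sum>i\<in>U. \<bar>m \<sigma> i\<bar>) \<le> sqrt (card U) * (C * sqrt n)"
proof -
  have "(\<Sum>i\<in>U. \<bar>1\<bar> * \<bar>m \<sigma> i\<bar>) \<le> sqrt (\<Sum>i\<in>U. 1\<^sup>2) * sqrt (\<Sum>i\<in>U. (m \<sigma> i)\<^sup>2)"
    by (rule L2_set_mult_ineq[unfolded L2_set_def])
  also have "sqrt (\<Sum>i\<in>U. (m \<sigma> i)\<^sup>2) \<le> sqrt (\<Sum>i<n. (m \<sigma> i)\<^sup>2)"
    using assms(1) by (intro real_sqrt_le_mono sum_mono2) auto
  also have "\<dots> \<le> C * sqrt n" using assms(2) by (rule L2_local_field_le)
  finally show ?thesis by (simp add: mult_left_mono)
qed

lemma sum_abs_local_field_le: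
  assumes "\<And>j. j < n \<Longrightarrow> \<bar>\<sigma> j\<bar> \<le> 1"
  shows "(\<Sum>i<n. \<bar>m \<sigma> i\<bar>) \<le> C * n"
proof -
  have "(\<Sum>i<n. \<bar>m \<sigma> i\<bar>) \<le> sqrt n * (C * sqrt n)"
    using sum_abs_local_field_subset_le[of "{..<n}" \<sigma>] assms by simp
  also have "\<dots> = C * n" by simp
  finally show ?thesis .
qed

lemma row_abs_local_field_le:
  assumes "i < n" "\<And>j. j < n \<Longrightarrow> \<bar>\<sigma> j\<bar> \<le> 1"
  shows "(\<Sum>j<n. \<bar>Q i j\<bar> * \<bar>m \<sigma> j\<bar>) \<le> C * (C * sqrt n)"
proof -
  have "(\<Sum>j<n. \<bar>Q i j\<bar> * \<bar>m \<sigma> j\<bar>) \<le> sqrt (\<Sum>j<n. (Q i j)\<^sup>2) * sqrt (\<Sum>j<n. (m \<sigma> j)\<^sup>2)"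
    by (rule L2_set_mult_ineq[unfolded L2_set_def])
  also have "\<dots> \<le> C * (C * sqrt n)"
    using L2_row_le[OF assms(1)] L2_local_field_le[of \<sigma>] assms(2) C_nonneg
    by (intro mult_mono) (auto intro: sum_nonneg)
  finally show ?thesis .
qed

definition quad_form where "quad_form \<sigma> = (\<Sum>i<n. \<Sum>j<n. \<sigma> i * Q i j * \<sigma> j)"

lemma ising_weight_quad_form:
  "ising_weight n \<beta> Q \<mu> \<sigma> = exp (\<beta> / 2 * quad_form \<sigma> + (\<Sum>i<n. \<mu> i * \<sigma> i))"
  unfolding ising_weight_def quad_form_def ..

lemma quad_form_local_field: "quad_form \<sigma> = (\<Sum>i<n. \<sigma> i * m \<sigma> i)"
  unfolding quad_form_def local_field_def by (simp add: sum_distrib_left mult.assoc)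

lemma sum_local_field_sym: "(\<Sum>i<n. \<sigma> i * m \<tau> i) = (\<Sum>i<n. \<tau> i * m \<sigma> i)"
proof -
  have "(\<Sum>i<n. \<sigma> i * m \<tau> i) = (\<Sum>i<n. \<Sum>j<n. \<sigma> i * Q i j * \<tau> j)"
    unfolding local_field_def by (simp add: sum_distrib_left mult.assoc)
  also have "\<dots> = (\<Sum>j<n. \<Sum>i<n. \<sigma> i * Q i j * \<tau> j)" by (rule sum.swap)
  also have "\<dots> = (\<Sum>j<n. \<Sum>i<n. \<tau> j * Q j i * \<sigma> i)"
    using symm by (intro sum.cong refl) (auto simp: algebra_simps)
  also have "\<dots> = (\<Sum>i<n. \<tau> i * m \<sigma> i)"
    unfolding local_field_def by (simp add: sum_distrib_left mult.assoc)
  finally show ?thesis .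
qed

lemma local_field_upd:
  assumes "i < n"
  shows "m (\<sigma>(i := v)) j = m \<sigma> j + Q j i * (v - \<sigma> i)"
proof -
  have "m (\<sigma>(i := v)) j = (\<Sum>k<n. Q j k * \<sigma> k + (if k = i then Q j i * (v - \<sigma> i) else 0))"
    unfolding local_field_def by (intro sum.cong) (auto simp: algebra_simps)
  also have "\<dots> = m \<sigma> j + Q j i * (v - \<sigma> i)"
    using assms by (simp add: sum.distrib local_field_def)
  finally show ?thesis .
qed

lemma local_field_upd_self: "i < n \<Longrightarrow> m (\<sigma>(i := v)) i = m \<sigma> i"
  using local_field_upd diag by simp

lemma quad_form_upd:
  assumes "i < n"
  shows "quad_form (\<sigma>(i := v)) = quad_form \<sigma> + 2 * (v - \<sigma> i) * m \<sigma> i"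
proof -
  let ?\<tau> = "\<sigma>(i := v)"
  have "quad_form ?\<tau> = (\<Sum>k<n. ?\<tau> k * m ?\<tau> k)" by (rule quad_form_local_field)
  also have "\<dots> = (\<Sum>k<n. \<sigma> k * m ?\<tau> k) + (v - \<sigma> i) * m ?\<tau> i"
  proof -
    have "(\<Sum>k<n. ?\<tau> k * m ?\<tau> k)
        = (\<Sum>k<n. \<sigma> k * m ?\<tau> k + (if k = i then (v - \<sigma> i) * m ?\<tau> i else 0))"
      by (intro sum.cong) (auto simp: algebra_simps)
    thus ?thesis using assms by (simp add: sum.distrib)
  qed
  also have "(\<Sum>k<n. \<sigma> k * m ?\<tau> k) = (\<Sum>k<n. ?\<tau> k * m \<sigma> k)" by (rule sum_local_field_sym)
  also have "\<dots> = quad_form \<sigma> + (v - \<sigma> i) * m \<sigma> i"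
  proof -
    have "(\<Sum>k<n. ?\<tau> k * m \<sigma> k)
        = (\<Sum>k<n. \<sigma> k * m \<sigma> k + (if k = i then (v - \<sigma> i) * m \<sigma> i else 0))"
      by (intro sum.cong) (auto simp: algebra_simps)
    thus ?thesis using assms by (simp add: sum.distrib quad_form_local_field)
  qed
  finally show ?thesis unfolding local_field_upd_self[OF assms] by (simp add: algebra_simps fun_upd_def)
qed

lemma ising_weight_flip:
  assumes "i < n" "\<mu> i = 0"
  shows "ising_weight n \<beta> Q \<mu> (\<sigma>(i := - \<sigma> i))
    = exp (- 2 * \<sigma> i * (\<beta> * m \<sigma> i)) * ising_weight n \<beta> Q \<mu> \<sigma>"
proof -
  have "(\<Sum>j<n. \<mu> j * (\<sigma>(i := - \<sigma> i)) j) = (\<Sum>j<n. \<mu> j * \<sigma> j)"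
    using assms by (intro sum.cong) auto
  moreover have "quad_form (\<sigma>(i := - \<sigma> i)) = quad_form \<sigma> - 4 * \<sigma> i * m \<sigma> i"
    using quad_form_upd[OF assms(1)] by simp
  ultimately show ?thesis unfolding ising_weight_quad_form
    by (simp add: exp_add[symmetric] algebra_simps)
       (metis distrib_left add.commute add_diff_cancel_left')
qed

lemma quad_form_diff_le:
  assumes U: "U \<subseteq> {..<n}"
    and spins: "\<And>k. k < n \<Longrightarrow> \<bar>\<sigma> k\<bar> \<le> 1" "\<And>k. k < n \<Longrightarrow> \<bar>\<sigma>' k\<bar> \<le> 1"
    and eq: "\<And>k. k < n \<Longrightarrow> k \<notin> U \<Longrightarrow> \<sigma> k = \<sigma>' k"
  shows "quad_form \<sigma> - quad_form \<sigma>' \<le> 4 * C * sqrt (card U) * sqrt n"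
proof -
  have "quad_form \<sigma> - quad_form \<sigma>' = (\<Sum>i<n. (\<sigma> i - \<sigma>' i) * (m \<sigma> i + m \<sigma>' i))"
  proof -
    have "(\<Sum>i<n. (\<sigma> i - \<sigma>' i) * (m \<sigma> i + m \<sigma>' i))
        = (\<Sum>i<n. \<sigma> i * m \<sigma> i) + (\<Sum>i<n. \<sigma> i * m \<sigma>' i)
          - (\<Sum>i<n. \<sigma>' i * m \<sigma> i) - (\<Sum>i<n. \<sigma>' i * m \<sigma>' i)"
      by (simp add: algebra_simps sum.distrib sum_subtractf)
    thus ?thesis using sum_local_field_sym[of \<sigma> \<sigma>'] by (simp add: quad_form_local_field)
  qed
  also have "\<dots> = (\<Sum>i\<in>U. (\<sigma> i - \<sigma>' i) * (m \<sigma> i + m \<sigma>' i))"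
    using eq by (intro sum.mono_neutral_right[OF _ U]) auto
  also have "\<dots> \<le> (\<Sum>i\<in>U. 2 * \<bar>m \<sigma> i\<bar> + 2 * \<bar>m \<sigma>' i\<bar>)"
  proof (intro sum_mono)
    fix i assume "i \<in> U"
    with U spins have "\<bar>\<sigma> i\<bar> \<le> 1" "\<bar>\<sigma>' i\<bar> \<le> 1" by auto
    hence "\<bar>\<sigma> i - \<sigma>' i\<bar> * \<bar>m \<sigma> i + m \<sigma>' i\<bar> \<le> 2 * \<bar>m \<sigma> i + m \<sigma>' i\<bar>"
      by (intro mult_right_mono) auto
    moreover have "(\<sigma> i - \<sigma>' i) * (m \<sigma> i + m \<sigma>' i) \<le> \<bar>\<sigma> i - \<sigma>' i\<bar> * \<bar>m \<sigma> i + m \<sigma>' i\<bar>"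
      by (simp only: abs_mult[symmetric] abs_ge_self)
    ultimately show "(\<sigma> i - \<sigma>' i) * (m \<sigma> i + m \<sigma>' i) \<le> 2 * \<bar>m \<sigma> i\<bar> + 2 * \<bar>m \<sigma>' i\<bar>"
      using abs_triangle_ineq[of "m \<sigma> i" "m \<sigma>' i"] by linarith
  qed
  also have "\<dots> = 2 * (\<Sum>i\<in>U. \<bar>m \<sigma> i\<bar>) + 2 * (\<Sum>i\<in>U. \<bar>m \<sigma>' i\<bar>)"
    by (simp add: sum.distrib sum_distrib_left)
  also have "\<dots> \<le> 4 * (sqrt (card U) * (C * sqrt n))"
    using sum_abs_local_field_subset_le[of U \<sigma>, OF U spins(1)]
      sum_abs_local_field_subset_le[of U \<sigma>', OF U spins(2)]
    by linarith
  finally show ?thesis by (simp add: ac_simps)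
qed

definition residual where "residual \<beta> \<sigma> j = m \<sigma> j * (\<sigma> j - tanh (\<beta> * m \<sigma> j))"

text \<open>As \<open>\<mu>\<^sub>i = 0\<close> and spin \<open>i\<close> is free, flipping it is an involution of the configurations
  which negates every summand.\<close>
lemma residual_centered:
  assumes i: "i < n" "i \<notin> F" "\<mu> i = 0"
    and h: "\<And>\<sigma>. h (\<sigma>(i := - \<sigma> i)) = h \<sigma>"
  shows "(\<Sum>\<sigma>\<in>spin_configs n F. ising_weight n \<beta> Q \<mu> \<sigma> * residual \<beta> \<sigma> i * h \<sigma>) = 0"
proof -
  define f where "f \<sigma> = ising_weight n \<beta> Q \<mu> \<sigma> * residual \<beta> \<sigma> i * h \<sigma>" for \<sigma>
  define flip where "flip \<sigma> = \<sigma>(i := - \<sigma> i)" for \<sigma> :: "nat \<Rightarrow> real"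
  have flip_flip: "flip (flip \<sigma>) = \<sigma>" for \<sigma> unfolding flip_def by auto
  have flip_mem: "\<sigma> \<in> spin_configs n F \<Longrightarrow> flip \<sigma> \<in> spin_configs n F" for \<sigma>
    unfolding flip_def using spin_configs_flip i by blast
  have "(\<Sum>\<sigma>\<in>spin_configs n F. f \<sigma>) = (\<Sum>\<sigma>\<in>spin_configs n F. f (flip \<sigma>))"
    by (rule sum.reindex_bij_witness[where i=flip and j=flip]) (auto simp: flip_flip flip_mem)
  also have "\<dots> = (\<Sum>\<sigma>\<in>spin_configs n F. - f \<sigma>)"
  proof (intro sum.cong refl)
    fix \<sigma> assume s: "\<sigma> \<in> spin_configs n F"
    have "f (flip \<sigma>) = ising_weight n \<beta> Q \<mu> \<sigma> * m \<sigma> i * h \<sigma> *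
        (exp (- 2 * \<sigma> i * (\<beta> * m \<sigma> i)) * (- \<sigma> i - tanh (\<beta> * m \<sigma> i)))"
      unfolding f_def flip_def h residual_def local_field_upd_self[OF i(1)]
        ising_weight_flip[of i \<mu>, OF i(1) i(3)] by simp
    also have "\<dots> = - f \<sigma>"
      unfolding f_def residual_def exp_tanh_flip[OF spin_configs_values[OF s i(1)]]
      by (simp add: algebra_simps)
    finally show "f (flip \<sigma>) = - f \<sigma>" .
  qed
  finally have "(\<Sum>\<sigma>\<in>spin_configs n F. f \<sigma>) = 0" by (simp add: sum_negf)
  thus ?thesis unfolding f_def .
qed

lemma residual_abs_le:
  assumes "\<bar>\<sigma> j\<bar> \<le> 1"
  shows "\<bar>residual \<beta> \<sigma> j\<bar> \<le> 2 * \<bar>m \<sigma> j\<bar>"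
proof -
  have "\<bar>\<sigma> j - tanh (\<beta> * m \<sigma> j)\<bar> \<le> 2"
    using assms tanh_real_bounds[of "\<beta> * m \<sigma> j"] by auto
  thus ?thesis unfolding residual_def abs_mult by (metis mult_left_mono abs_ge_zero mult.commute)
qed

lemma residual_delete_diff:
  assumes i: "i < n" and j: "j < n" and spins: "\<And>k. k < n \<Longrightarrow> \<bar>\<sigma> k\<bar> \<le> 1" and b: "\<beta> \<ge> 0"
  shows "\<bar>residual \<beta> \<sigma> j - residual \<beta> (\<sigma>(i := 0)) j\<bar> \<le>
     2 * \<bar>Q j i\<bar> + (\<bar>m \<sigma> j\<bar> + \<bar>Q j i\<bar>) * ((if i = j then 1 else 0) + \<beta> * \<bar>Q j i\<bar>)"
proof -
  define m1 where "m1 = m \<sigma> j"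
  define m2 where "m2 = m (\<sigma>(i := 0)) j"
  define u1 where "u1 = \<sigma> j - tanh (\<beta> * m1)"
  define u2 where "u2 = (\<sigma>(i := 0)) j - tanh (\<beta> * m2)"
  have si: "\<bar>\<sigma> i\<bar> \<le> 1" using spins i by blast
  have m12: "\<bar>m1 - m2\<bar> \<le> \<bar>Q j i\<bar>"
    unfolding m1_def m2_def local_field_upd[OF i] using si by (simp add: abs_mult mult_left_le)
  have u1: "\<bar>u1\<bar> \<le> 2"
    unfolding u1_def using tanh_real_bounds[of "\<beta> * m1"] spins[OF j] by (auto simp: abs_le_iff)
  have m2: "\<bar>m2\<bar> \<le> \<bar>m1\<bar> + \<bar>Q j i\<bar>" using m12 by linarith
  have "\<bar>\<sigma> j - (\<sigma>(i := 0)) j\<bar> \<le> (if i = j then 1 else 0)" using si by auto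
  moreover have "\<bar>tanh (\<beta> * m1) - tanh (\<beta> * m2)\<bar> \<le> \<beta> * \<bar>Q j i\<bar>"
  proof -
    have "\<bar>tanh (\<beta> * m1) - tanh (\<beta> * m2)\<bar> \<le> \<bar>\<beta> * m1 - \<beta> * m2\<bar>" by (rule tanh_lipschitz)
    also have "\<dots> = \<beta> * \<bar>m1 - m2\<bar>" using b by (simp add: abs_mult right_diff_distrib[symmetric])
    also have "\<dots> \<le> \<beta> * \<bar>Q j i\<bar>" using m12 b by (intro mult_left_mono)
    finally show ?thesis .
  qed
  ultimately have u12: "\<bar>u1 - u2\<bar> \<le> (if i = j then 1 else 0) + \<beta> * \<bar>Q j i\<bar>"
    unfolding u1_def u2_def by linarith
  have "residual \<beta> \<sigma> j - residual \<beta> (\<sigma>(i := 0)) j = (m1 - m2) * u1 + m2 * (u1 - u2)"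
    unfolding residual_def m1_def[symmetric] m2_def[symmetric] u1_def u2_def
    by (simp add: algebra_simps)
  also have "\<bar>\<dots>\<bar> \<le> \<bar>m1 - m2\<bar> * \<bar>u1\<bar> + \<bar>m2\<bar> * \<bar>u1 - u2\<bar>"
    by (metis abs_mult abs_triangle_ineq)
  also have "\<dots> \<le> \<bar>Q j i\<bar> * 2 + (\<bar>m1\<bar> + \<bar>Q j i\<bar>) * ((if i = j then 1 else 0) + \<beta> * \<bar>Q j i\<bar>)"
    by (intro add_mono mult_mono m12 u1 m2 u12) auto
  finally show ?thesis unfolding m1_def by (simp add: mult.commute)
qed

definition influence_bound where
  "influence_bound \<beta> = (3 * C + \<beta> * C\<^sup>2) * sqrt n + \<beta> * C\<^sup>2"

lemma influence_bound_nonneg: "\<beta> \<ge> 0 \<Longrightarrow> influence_bound \<beta> \<ge> 0"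
  unfolding influence_bound_def using C_nonneg by simp

lemma sum_residual_delete_diff_le:
  assumes i: "i < n" and spins: "\<And>k. k < n \<Longrightarrow> \<bar>\<sigma> k\<bar> \<le> 1" and b: "\<beta> \<ge> 0"
  shows "(\<Sum>j<n. \<bar>residual \<beta> \<sigma> j - residual \<beta> (\<sigma>(i := 0)) j\<bar>) \<le> influence_bound \<beta>"
proof -
  have "(\<Sum>j<n. \<bar>residual \<beta> \<sigma> j - residual \<beta> (\<sigma>(i := 0)) j\<bar>) \<le>
    (\<Sum>j<n. 2 * \<bar>Q i j\<bar> + (if i = j then \<bar>m \<sigma> j\<bar> + \<bar>Q j i\<bar> else 0)
        + \<beta> * (\<bar>Q i j\<bar> * \<bar>m \<sigma> j\<bar>) + \<beta> * (Q i j)\<^sup>2)"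
  proof (intro sum_mono)
    fix j assume j: "j \<in> {..<n}"
    have "\<bar>residual \<beta> \<sigma> j - residual \<beta> (\<sigma>(i := 0)) j\<bar> \<le>
        2 * \<bar>Q j i\<bar> + (\<bar>m \<sigma> j\<bar> + \<bar>Q j i\<bar>) * ((if i = j then 1 else 0) + \<beta> * \<bar>Q j i\<bar>)"
      using j by (intro residual_delete_diff[OF i _ spins b]) auto
    moreover have "Q j i = Q i j" using symm i j by auto
    ultimately show "\<bar>residual \<beta> \<sigma> j - residual \<beta> (\<sigma>(i := 0)) j\<bar> \<le> 2 * \<bar>Q i j\<bar>
        + (if i = j then \<bar>m \<sigma> j\<bar> + \<bar>Q j i\<bar> else 0)
        + \<beta> * (\<bar>Q i j\<bar> * \<bar>m \<sigma> j\<bar>) + \<beta> * (Q i j)\<^sup>2"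
      by (cases "i = j") (simp_all add: algebra_simps power2_eq_square)
  qed
  also have "\<dots> = 2 * (\<Sum>j<n. \<bar>Q i j\<bar>) + (\<bar>m \<sigma> i\<bar> + \<bar>Q i i\<bar>)
      + \<beta> * (\<Sum>j<n. \<bar>Q i j\<bar> * \<bar>m \<sigma> j\<bar>) + \<beta> * (\<Sum>j<n. (Q i j)\<^sup>2)"
    using i by (simp add: sum.distrib sum_distrib_left)
  also have "\<dots> \<le> 2 * (sqrt n * C) + (sqrt n * C + 0) + \<beta> * (C * (C * sqrt n)) + \<beta> * C\<^sup>2"
    using b
    by (intro add_mono mult_left_mono row_sum_abs_le i local_field_abs_le spins
        row_abs_local_field_le row_sum_sq_le) (auto simp: diag i)
  also have "\<dots> = influence_bound \<beta>"
    unfolding influence_bound_def by (simp add: algebra_simps power2_eq_square)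
  finally show ?thesis .
qed

text \<open>Since each residual in \<open>G\<close> is centred given the other spins, the cross moment of
  residuals \<open>i\<close> and \<open>j\<close> only sees how residual \<open>j\<close> depends on \<open>\<sigma>\<^sub>i\<close>.\<close>
lemma residual_second_moment:
  assumes G: "G \<subseteq> {..<n}" "\<And>i. i \<in> G \<Longrightarrow> i \<notin> F \<and> \<mu> i = 0" and b: "\<beta> \<ge> 0"
  shows "(\<Sum>\<sigma>\<in>spin_configs n F. ising_weight n \<beta> Q \<mu> \<sigma> * (\<Sum>i\<in>G. residual \<beta> \<sigma> i)\<^sup>2)
     \<le> (\<Sum>\<sigma>\<in>spin_configs n F. ising_weight n \<beta> Q \<mu> \<sigma>) * (2 * (C * n) * influence_bound \<beta>)"
proof -
  let ?SC = "spin_configs n F"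
  let ?w = "ising_weight n \<beta> Q \<mu>"
  let ?Y = "residual \<beta>"
  define D where "D \<sigma> i j = ?Y \<sigma> j - ?Y (\<sigma>(i := 0)) j" for \<sigma> i j
  have "(\<Sum>\<sigma>\<in>?SC. ?w \<sigma> * (\<Sum>i\<in>G. ?Y \<sigma> i)\<^sup>2)
      = (\<Sum>\<sigma>\<in>?SC. \<Sum>i\<in>G. \<Sum>j\<in>G. ?w \<sigma> * ?Y \<sigma> i * ?Y \<sigma> j)"
    unfolding power2_eq_square sum_product by (simp add: sum_distrib_left mult.assoc)
  also have "\<dots> = (\<Sum>i\<in>G. \<Sum>j\<in>G. \<Sum>\<sigma>\<in>?SC. ?w \<sigma> * ?Y \<sigma> i * ?Y \<sigma> j)"
    by (simp add: sum.swap[of _ ?SC] sum.swap[of _ ?SC G])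
  also have "\<dots> = (\<Sum>i\<in>G. \<Sum>j\<in>G. \<Sum>\<sigma>\<in>?SC. ?w \<sigma> * ?Y \<sigma> i * D \<sigma> i j)"
  proof (rule sum.cong[OF refl], rule sum.cong[OF refl])
    fix i j assume i: "i \<in> G"
    have "(\<Sum>\<sigma>\<in>?SC. ?w \<sigma> * ?Y \<sigma> i * ?Y (\<sigma>(i := 0)) j) = 0"
      using G i by (intro residual_centered) auto
    moreover have "(\<Sum>\<sigma>\<in>?SC. ?w \<sigma> * ?Y \<sigma> i * ?Y \<sigma> j) =
      (\<Sum>\<sigma>\<in>?SC. ?w \<sigma> * ?Y \<sigma> i * D \<sigma> i j) + (\<Sum>\<sigma>\<in>?SC. ?w \<sigma> * ?Y \<sigma> i * ?Y (\<sigma>(i := 0)) j)"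
      unfolding D_def sum.distrib[symmetric] by (intro sum.cong) (auto simp: algebra_simps)
    ultimately show "(\<Sum>\<sigma>\<in>?SC. ?w \<sigma> * ?Y \<sigma> i * ?Y \<sigma> j) = (\<Sum>\<sigma>\<in>?SC. ?w \<sigma> * ?Y \<sigma> i * D \<sigma> i j)"
      by simp
  qed
  also have "\<dots> = (\<Sum>\<sigma>\<in>?SC. ?w \<sigma> * (\<Sum>i\<in>G. \<Sum>j\<in>G. ?Y \<sigma> i * D \<sigma> i j))"
    by (simp add: sum.swap[of _ ?SC] sum.swap[of _ ?SC G] sum_distrib_left mult.assoc)
  also have "\<dots> \<le> (\<Sum>\<sigma>\<in>?SC. ?w \<sigma> * (2 * (C * n) * influence_bound \<beta>))"
  proof (intro sum_mono mult_left_mono less_imp_le[OF ising_weight_pos])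
    fix \<sigma> assume s: "\<sigma> \<in> ?SC"
    have spins: "\<And>k. k < n \<Longrightarrow> \<bar>\<sigma> k\<bar> \<le> 1" using spin_configs_abs_le_1[OF s] by blast
    have "(\<Sum>i\<in>G. \<Sum>j\<in>G. ?Y \<sigma> i * D \<sigma> i j) \<le> (\<Sum>i\<in>G. \<Sum>j\<in>G. \<bar>?Y \<sigma> i\<bar> * \<bar>D \<sigma> i j\<bar>)"
      by (intro sum_mono) (metis abs_ge_self abs_mult)
    also have "\<dots> \<le> (\<Sum>i\<in>G. \<Sum>j<n. \<bar>?Y \<sigma> i\<bar> * \<bar>D \<sigma> i j\<bar>)"
      using G(1) by (intro sum_mono sum_mono2) auto
    also have "\<dots> \<le> (\<Sum>i<n. \<Sum>j<n. \<bar>?Y \<sigma> i\<bar> * \<bar>D \<sigma> i j\<bar>)"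
      using G(1) by (intro sum_mono2) (auto intro: sum_nonneg)
    also have "\<dots> = (\<Sum>i<n. \<bar>?Y \<sigma> i\<bar> * (\<Sum>j<n. \<bar>D \<sigma> i j\<bar>))" by (simp add: sum_distrib_left)
    also have "\<dots> \<le> (\<Sum>i<n. (2 * \<bar>m \<sigma> i\<bar>) * influence_bound \<beta>)"
      unfolding D_def using spins b
      by (intro sum_mono mult_mono residual_abs_le sum_residual_delete_diff_le)
         (auto intro: sum_nonneg)
    also have "\<dots> = 2 * (\<Sum>i<n. \<bar>m \<sigma> i\<bar>) * influence_bound \<beta>"
      by (simp add: sum_distrib_left sum_distrib_right mult.assoc)
    also have "\<dots> \<le> 2 * (C * n) * influence_bound \<beta>"
      using sum_abs_local_field_le[of \<sigma>] spins influence_bound_nonneg[OF b]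
      by (intro mult_right_mono) auto
    finally show "(\<Sum>i\<in>G. \<Sum>j\<in>G. ?Y \<sigma> i * D \<sigma> i j) \<le> 2 * (C * n) * influence_bound \<beta>" .
  qed
  also have "\<dots> = (\<Sum>\<sigma>\<in>?SC. ?w \<sigma>) * (2 * (C * n) * influence_bound \<beta>)"
    by (simp add: sum_distrib_right)
  finally show ?thesis .
qed

lemma fibre_energy_sum_le:
  assumes U: "U \<subseteq> {..<n}" and \<tau>: "\<tau> \<in> restrict_spins U ` spin_configs n {}" and b: "\<beta> \<ge> 0"
  shows "(\<Sum>\<sigma>\<in>spin_fibre n U \<tau>'. exp (\<beta> / 2 * quad_form \<sigma>))
     \<le> exp (2 * \<beta> * C * sqrt (card U) * sqrt n) * (\<Sum>\<sigma>\<in>spin_fibre n U \<tau>. exp (\<beta> / 2 * quad_form \<sigma>))"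
proof -
  define E where "E = 2 * \<beta> * C * sqrt (card U) * sqrt n"
  let ?ov = "overwrite_spins U \<tau>"
  have pointwise: "exp (\<beta> / 2 * quad_form \<sigma>) \<le> exp E * exp (\<beta> / 2 * quad_form (?ov \<sigma>))"
    if s: "\<sigma> \<in> spin_fibre n U \<tau>'" for \<sigma>
  proof -
    have s0: "\<sigma> \<in> spin_configs n {}" using s unfolding spin_fibre_def by auto
    have ov: "?ov \<sigma> \<in> spin_configs n {}"
      using overwrite_spins_in_fibre[OF U \<tau> s0] unfolding spin_fibre_def by auto
    have "quad_form \<sigma> - quad_form (?ov \<sigma>) \<le> 4 * C * sqrt (card U) * sqrt n"
    proof (rule quad_form_diff_le[OF U])
      show "\<And>k. k < n \<Longrightarrow> \<bar>\<sigma> k\<bar> \<le> 1" using spin_configs_abs_le_1[OF s0] by blast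
      show "\<And>k. k < n \<Longrightarrow> \<bar>?ov \<sigma> k\<bar> \<le> 1" using spin_configs_abs_le_1[OF ov] by blast
    qed (simp add: overwrite_spins_def)
    hence "\<beta> / 2 * (quad_form \<sigma> - quad_form (?ov \<sigma>)) \<le> \<beta> / 2 * (4 * C * sqrt (card U) * sqrt n)"
      using b by (intro mult_left_mono) auto
    hence "\<beta> / 2 * quad_form \<sigma> \<le> E + \<beta> / 2 * quad_form (?ov \<sigma>)"
      unfolding E_def by (simp add: algebra_simps)
    thus ?thesis by (simp add: exp_add[symmetric])
  qed
  have "(\<Sum>\<sigma>\<in>spin_fibre n U \<tau>'. exp (\<beta> / 2 * quad_form \<sigma>))
      \<le> (\<Sum>\<sigma>\<in>spin_fibre n U \<tau>'. exp E * exp (\<beta> / 2 * quad_form (?ov \<sigma>)))"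
    using pointwise by (rule sum_mono)
  also have "\<dots> = exp E * (\<Sum>\<sigma>\<in>?ov ` spin_fibre n U \<tau>'. exp (\<beta> / 2 * quad_form \<sigma>))"
    by (simp add: sum_distrib_left sum.reindex[OF inj_on_overwrite_spins])
  also have "\<dots> \<le> exp E * (\<Sum>\<sigma>\<in>spin_fibre n U \<tau>. exp (\<beta> / 2 * quad_form \<sigma>))"
    by (intro mult_left_mono sum_mono2 finite_spin_fibre overwrite_spins_image_fibre[OF U \<tau>]) auto
  finally show ?thesis unfolding E_def .
qed

lemma ising_Z_le_fibre:
  assumes U: "U \<subseteq> {..<n}" and \<tau>: "\<tau> \<in> restrict_spins U ` spin_configs n {}" and b: "\<beta> \<ge> 0"
  shows "ising_Z n \<beta> Q (\<lambda>_. 0) \<le> card (restrict_spins U ` spin_configs n {})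
      * exp (2 * \<beta> * C * sqrt (card U) * sqrt n) * (\<Sum>\<sigma>\<in>spin_fibre n U \<tau>. exp (\<beta> / 2 * quad_form \<sigma>))"
proof -
  have "ising_Z n \<beta> Q (\<lambda>_. 0) = (\<Sum>\<sigma>\<in>spin_configs n {}. exp (\<beta> / 2 * quad_form \<sigma>))"
    unfolding ising_Z_def ising_weight_quad_form by simp
  also have "\<dots> = (\<Sum>\<tau>'\<in>restrict_spins U ` spin_configs n {}.
      \<Sum>\<sigma>\<in>spin_fibre n U \<tau>'. exp (\<beta> / 2 * quad_form \<sigma>))"
    by (rule sum_spin_fibres[symmetric])
  also have "\<dots> \<le> (\<Sum>\<tau>'\<in>restrict_spins U ` spin_configs n {}.
      exp (2 * \<beta> * C * sqrt (card U) * sqrt n) * (\<Sum>\<sigma>\<in>spin_fibre n U \<tau>. exp (\<beta> / 2 * quad_form \<sigma>)))"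
    by (intro sum_mono fibre_energy_sum_le[OF U \<tau> b])
  finally show ?thesis by simp
qed

lemma card_spin_fibre_le:
  assumes U: "U \<subseteq> {..<n}" and \<tau>: "\<tau> \<in> restrict_spins U ` spin_configs n {}" and b: "\<beta> \<ge> 0"
  shows "real (card (spin_fibre n U \<tau>)) \<le> 2 ^ n * exp (2 * \<beta> * C * sqrt (card U) * sqrt n)
    * (\<Sum>\<sigma>\<in>spin_fibre n U \<tau>. exp (\<beta> / 2 * quad_form \<sigma>)) / ising_Z n \<beta> Q (\<lambda>_. 0)"
proof -
  let ?N = "real (card (restrict_spins U ` spin_configs n {}))"
  let ?E = "exp (2 * \<beta> * C * sqrt (card U) * sqrt n)"
  let ?S = "\<Sum>\<sigma>\<in>spin_fibre n U \<tau>. exp (\<beta> / 2 * quad_form \<sigma>)"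
  have "real (card (spin_fibre n U \<tau>)) * ising_Z n \<beta> Q (\<lambda>_. 0)
      \<le> real (card (spin_fibre n U \<tau>)) * (?N * ?E * ?S)"
    by (intro mult_left_mono ising_Z_le_fibre[OF U \<tau> b]) simp
  also have "\<dots> = 2 ^ n * ?E * ?S"
    using card_spin_fibre[OF U \<tau>] by simp
  finally show ?thesis using ising_Z_pos by (simp add: pos_le_divide_eq)
qed

lemma ising_weight_on_fibre:
  assumes "\<And>i. i < n \<Longrightarrow> i \<notin> U \<Longrightarrow> \<mu> i = 0" "\<sigma> \<in> spin_fibre n U \<tau>"
  shows "ising_weight n \<beta> Q \<mu> \<sigma> = exp (\<Sum>i<n. \<mu> i * \<tau> i) * exp (\<beta> / 2 * quad_form \<sigma>)"
proof -
  have "\<mu> i * \<sigma> i = \<mu> i * \<tau> i" if "i < n" for i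
    using assms that unfolding spin_fibre_def restrict_spins_def by (cases "i \<in> U") auto
  hence "(\<Sum>i<n. \<mu> i * \<sigma> i) = (\<Sum>i<n. \<mu> i * \<tau> i)" by (intro sum.cong) auto
  thus ?thesis unfolding ising_weight_quad_form by (simp add: exp_add mult.commute)
qed

text \<open>Within a fibre the field contributes a constant factor, so the conditional law is the
  \<open>\<mu> = 0\<close> model restricted to the fibre, and the fibre sum is comparable to \<open>Z(\<beta>, Q, 0)\<close>
  divided by the number of fibres.\<close>
lemma low_energy_fibre_le:
  assumes U: "U \<subseteq> {..<n}" and FU: "F \<subseteq> U" and \<mu>: "\<And>i. i < n \<Longrightarrow> i \<notin> U \<Longrightarrow> \<mu> i = 0"
    and b: "\<beta> \<ge> 0" and \<tau>: "\<tau> \<in> restrict_spins U ` spin_configs n F"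
  shows "(\<Sum>\<sigma>\<in>{\<sigma> \<in> spin_configs n F \<inter> {\<sigma>. quad_form \<sigma> < d}. restrict_spins U \<sigma> = \<tau>}.
            ising_weight n \<beta> Q \<mu> \<sigma>)
    \<le> exp (\<beta> / 2 * d) * 2 ^ n * exp (2 * \<beta> * C * sqrt (card U) * sqrt n) / ising_Z n \<beta> Q (\<lambda>_. 0)
       * (\<Sum>\<sigma>\<in>{\<sigma> \<in> spin_configs n F. restrict_spins U \<sigma> = \<tau>}. ising_weight n \<beta> Q \<mu> \<sigma>)"
proof -
  let ?e = "\<lambda>\<sigma>. exp (\<beta> / 2 * quad_form \<sigma>)"
  let ?fib = "spin_fibre n U \<tau>"
  define K where "K = exp (\<Sum>i<n. \<mu> i * \<tau> i)"
  define E where "E = exp (2 * \<beta> * C * sqrt (card U) * sqrt n)"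
  define Z0 where "Z0 = ising_Z n \<beta> Q (\<lambda>_. 0)"
  have fib: "{\<sigma> \<in> spin_configs n F. restrict_spins U \<sigma> = \<tau>} = ?fib"
    by (rule spin_fibre_fixed[OF FU \<tau>])
  have \<tau>0: "\<tau> \<in> restrict_spins U ` spin_configs n {}"
    using \<tau> unfolding spin_configs_def by auto
  have weight: "ising_weight n \<beta> Q \<mu> \<sigma> = K * ?e \<sigma>" if "\<sigma> \<in> ?fib" for \<sigma>
    unfolding K_def using ising_weight_on_fibre[OF \<mu> that] .
  have "(\<Sum>\<sigma>\<in>{\<sigma> \<in> spin_configs n F \<inter> {\<sigma>. quad_form \<sigma> < d}. restrict_spins U \<sigma> = \<tau>}.
          ising_weight n \<beta> Q \<mu> \<sigma>) = (\<Sum>\<sigma>\<in>?fib \<inter> {\<sigma>. quad_form \<sigma> < d}. K * ?e \<sigma>)"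
    using fib weight by (intro sum.cong) auto
  also have "\<dots> \<le> (\<Sum>\<sigma>\<in>?fib \<inter> {\<sigma>. quad_form \<sigma> < d}. K * exp (\<beta> / 2 * d))"
    unfolding K_def using b by (intro sum_mono mult_left_mono) (auto intro: mult_left_mono)
  also have "\<dots> \<le> (\<Sum>\<sigma>\<in>?fib. K * exp (\<beta> / 2 * d))"
    unfolding K_def by (intro sum_mono2 finite_spin_fibre) auto
  also have "\<dots> = K * exp (\<beta> / 2 * d) * card ?fib" by simp
  also have "\<dots> \<le> K * exp (\<beta> / 2 * d) * (2 ^ n * E * (\<Sum>\<sigma>\<in>?fib. ?e \<sigma>) / Z0)"
    unfolding E_def Z0_def K_def by (intro mult_left_mono card_spin_fibre_le[OF U \<tau>0 b]) auto
  also have "\<dots> = exp (\<beta> / 2 * d) * 2 ^ n * E / Z0 * (\<Sum>\<sigma>\<in>?fib. K * ?e \<sigma>)"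
    by (simp add: sum_distrib_left sum_divide_distrib field_simps)
  also have "\<dots> = exp (\<beta> / 2 * d) * 2 ^ n * E / Z0
      * (\<Sum>\<sigma>\<in>{\<sigma> \<in> spin_configs n F. restrict_spins U \<sigma> = \<tau>}. ising_weight n \<beta> Q \<mu> \<sigma>)"
    unfolding fib using weight by (intro arg_cong2[where f="(*)"] sum.cong) auto
  finally show ?thesis unfolding E_def Z0_def .
qed

lemma low_energy_weight_le:
  assumes U: "U \<subseteq> {..<n}" and FU: "F \<subseteq> U" and \<mu>: "\<And>i. i < n \<Longrightarrow> i \<notin> U \<Longrightarrow> \<mu> i = 0"
    and b: "\<beta> \<ge> 0"
  shows "(\<Sum>\<sigma>\<in>spin_configs n F \<inter> {\<sigma>. quad_form \<sigma> < d}. ising_weight n \<beta> Q \<mu> \<sigma>)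
    \<le> exp (\<beta> / 2 * d) * 2 ^ n * exp (2 * \<beta> * C * sqrt (card U) * sqrt n) / ising_Z n \<beta> Q (\<lambda>_. 0)
       * (\<Sum>\<sigma>\<in>spin_configs n F. ising_weight n \<beta> Q \<mu> \<sigma>)"
    (is "?lhs \<le> ?R * ?W")
proof -
  let ?SC = "spin_configs n F"
  let ?w = "ising_weight n \<beta> Q \<mu>"
  let ?T = "restrict_spins U ` ?SC"
  have "?lhs = (\<Sum>\<tau>\<in>?T. \<Sum>\<sigma>\<in>{\<sigma> \<in> ?SC \<inter> {\<sigma>. quad_form \<sigma> < d}. restrict_spins U \<sigma> = \<tau>}. ?w \<sigma>)"
    by (rule sum.group[symmetric]) (auto simp: finite_spin_configs)
  also have "\<dots> \<le> (\<Sum>\<tau>\<in>?T. ?R * (\<Sum>\<sigma>\<in>{\<sigma> \<in> ?SC. restrict_spins U \<sigma> = \<tau>}. ?w \<sigma>))"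
    by (intro sum_mono low_energy_fibre_le[OF U FU \<mu> b])
  also have "\<dots> = ?R * ?W"
    unfolding sum_distrib_left[symmetric] by (subst sum.group) (auto simp: finite_spin_configs)
  finally show ?thesis .
qed

lemma quad_form_le_sum_abs_local_field:
  assumes "\<And>k. k < n \<Longrightarrow> \<bar>\<sigma> k\<bar> \<le> 1"
  shows "quad_form \<sigma> \<le> (\<Sum>i<n. \<bar>m \<sigma> i\<bar>)"
  unfolding quad_form_local_field
proof (intro sum_mono)
  fix i assume "i \<in> {..<n}"
  hence "\<bar>\<sigma> i * m \<sigma> i\<bar> \<le> \<bar>m \<sigma> i\<bar>" using assms by (simp add: abs_mult mult_left_le_one_le)
  thus "\<sigma> i * m \<sigma> i \<le> \<bar>m \<sigma> i\<bar>" by linarith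
qed

lemma tanh_score_split_residuals:
  assumes "U \<subseteq> {..<n}"
  shows "tanh_score n (m \<sigma>) \<sigma> \<beta>
    = (\<Sum>i\<in>{..<n} - U. residual \<beta> \<sigma> i) + (\<Sum>i\<in>U. residual \<beta> \<sigma> i)"
proof -
  have "tanh_score n (m \<sigma>) \<sigma> \<beta> = (\<Sum>i<n. residual \<beta> \<sigma> i)"
    unfolding tanh_score_def residual_def ..
  also have "\<dots> = (\<Sum>i\<in>({..<n} - U) \<union> U. residual \<beta> \<sigma> i)"
    using assms by (intro sum.cong) auto
  also have "\<dots> = (\<Sum>i\<in>{..<n} - U. residual \<beta> \<sigma> i) + (\<Sum>i\<in>U. residual \<beta> \<sigma> i)"
    using assms finite_subset by (intro sum.union_disjoint) auto
  finally show ?thesis .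
qed

lemma abs_sum_residual_subset_le:
  assumes U: "U \<subseteq> {..<n}" and spins: "\<And>k. k < n \<Longrightarrow> \<bar>\<sigma> k\<bar> \<le> 1"
  shows "\<bar>\<Sum>i\<in>U. residual \<beta> \<sigma> i\<bar> \<le> 2 * (sqrt (card U) * (C * sqrt n))"
proof -
  have "\<bar>\<Sum>i\<in>U. residual \<beta> \<sigma> i\<bar> \<le> (\<Sum>i\<in>U. 2 * \<bar>m \<sigma> i\<bar>)"
    using U spins by (intro order_trans[OF sum_abs] sum_mono residual_abs_le) auto
  also have "\<dots> \<le> 2 * (sqrt (card U) * (C * sqrt n))"
    using sum_abs_local_field_subset_le[of U \<sigma>, OF U spins]
    by (simp add: sum_distrib_left[symmetric])
  finally show ?thesis .
qed

lemma mple_near_beta: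
  assumes n: "n > 0" and Cp: "C > 0" and bp: "\<beta> > 0" and eta: "\<eta> > 0" and d: "\<delta> > 0"
    and g0: "\<gamma> > 0"
    and g1: "\<forall>x. \<delta> / 2 \<le> x \<and> x \<le> 4 * C\<^sup>2 / \<delta> \<longrightarrow> \<gamma> \<le> tanh ((\<beta> + \<eta>) * x) - tanh (\<beta> * x)"
    and g2: "\<forall>x. \<delta> / 2 \<le> x \<and> x \<le> 4 * C\<^sup>2 / \<delta> \<longrightarrow> \<gamma> \<le> tanh (\<beta> * x) - tanh ((\<beta> - \<eta>) * x)"
    and eps: "\<epsilon> = \<gamma> * \<delta> / 16"
    and U: "U \<subseteq> {..<n}" and small: "2 * (sqrt (card U) * (C * sqrt n)) \<le> \<epsilon> * n"
    and s: "\<sigma> \<in> spin_configs n F"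
    and bh: "(\<exists>b. pl_score n Q \<sigma> b = 0) \<Longrightarrow> pl_score n Q \<sigma> bh = 0"
    and q: "quad_form \<sigma> \<ge> \<delta> * n" and T: "\<bar>\<Sum>i\<in>{..<n} - U. residual \<beta> \<sigma> i\<bar> \<le> \<epsilon> * n"
  shows "\<bar>bh - \<beta>\<bar> < \<eta>"
proof -
  have sa: "\<And>k. k < n \<Longrightarrow> \<bar>\<sigma> k\<bar> \<le> 1" using spin_configs_abs_le_1[OF s] by blast
  have M: "(\<Sum>i<n. (m \<sigma> i)\<^sup>2) \<le> C\<^sup>2 * n" using sa by (rule sum_local_field_sq_le)
  have "quad_form \<sigma> \<le> (\<Sum>i<n. \<bar>m \<sigma> i\<bar>)"
    using sa by (rule quad_form_le_sum_abs_local_field)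
  hence A: "(\<Sum>i<n. \<bar>m \<sigma> i\<bar>) \<ge> \<delta> * n" using q by linarith
  have gap1: "tanh_score n (m \<sigma>) \<sigma> \<beta> - tanh_score n (m \<sigma>) \<sigma> (\<beta> + \<eta>) \<ge> \<gamma> * (\<delta> * n / 4)"
    unfolding tanh_score_diff using eta d Cp g1 g0 M A by (intro sum_tanh_gap_lower) auto
  have gap2: "tanh_score n (m \<sigma>) \<sigma> (\<beta> - \<eta>) - tanh_score n (m \<sigma>) \<sigma> \<beta> \<ge> \<gamma> * (\<delta> * n / 4)"
    unfolding tanh_score_diff using eta d Cp g2 g0 M A by (intro sum_tanh_gap_lower) auto
  have split: "tanh_score n (m \<sigma>) \<sigma> \<beta>
      = (\<Sum>i\<in>{..<n} - U. residual \<beta> \<sigma> i) + (\<Sum>i\<in>U. residual \<beta> \<sigma> i)"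
    using U by (rule tanh_score_split_residuals)
  have R: "\<bar>\<Sum>i\<in>U. residual \<beta> \<sigma> i\<bar> \<le> \<epsilon> * n"
    using abs_sum_residual_subset_le[of U \<sigma> \<beta>, OF U sa] small by linarith
  have key: "\<gamma> * (\<delta> * n / 4) = 4 * (\<epsilon> * n)" unfolding eps by simp
  have en: "\<epsilon> * n > 0" unfolding eps using g0 d n by simp
  have neg: "tanh_score n (m \<sigma>) \<sigma> (\<beta> + \<eta>) < 0" using gap1 split T R key en by linarith
  have pos: "tanh_score n (m \<sigma>) \<sigma> (\<beta> - \<eta>) > 0" using gap2 split T R key en by linarith
  show ?thesis
  proof (rule tanh_score_root_near[OF neg pos eta])
    assume "\<exists>b. tanh_score n (m \<sigma>) \<sigma> b = 0"
    hence "\<exists>b. pl_score n Q \<sigma> b = 0" unfolding pl_score_tanh_score by auto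
    thus "tanh_score n (m \<sigma>) \<sigma> bh = 0" using bh n unfolding pl_score_tanh_score by simp
  qed
qed

lemma mple_error_prob_le:
  assumes n: "n > 0" and Cp: "C > 0" and bp: "\<beta> > 0" and eta: "\<eta> > 0" and d: "\<delta> > 0"
    and g0: "\<gamma> > 0"
    and g1: "\<forall>x. \<delta> / 2 \<le> x \<and> x \<le> 4 * C\<^sup>2 / \<delta> \<longrightarrow> \<gamma> \<le> tanh ((\<beta> + \<eta>) * x) - tanh (\<beta> * x)"
    and g2: "\<forall>x. \<delta> / 2 \<le> x \<and> x \<le> 4 * C\<^sup>2 / \<delta> \<longrightarrow> \<gamma> \<le> tanh (\<beta> * x) - tanh ((\<beta> - \<eta>) * x)"
    and eps: "\<epsilon> = \<gamma> * \<delta> / 16"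
    and F: "F \<subseteq> {..<n}" and U: "U = F \<union> {i. i < n \<and> \<mu> i \<noteq> 0}"
    and small: "2 * (sqrt (card U) * (C * sqrt n)) \<le> \<epsilon> * n"
    and bh: "\<And>\<sigma>. (\<exists>b. pl_score n Q \<sigma> b = 0) \<Longrightarrow> pl_score n Q \<sigma> (bh \<sigma>) = 0"
  shows "ising_prob n \<beta> Q \<mu> F {\<sigma>. \<bar>bh \<sigma> - \<beta>\<bar> > \<eta>}
     \<le> exp (\<beta> / 2 * (\<delta> * n)) * 2 ^ n * exp (2 * \<beta> * C * sqrt (card U) * sqrt n)
         / ising_Z n \<beta> Q (\<lambda>_. 0)
       + 2 * (C * n) * influence_bound \<beta> / (\<epsilon> * n)\<^sup>2"
proof -
  let ?T = "\<lambda>\<sigma>. \<Sum>i\<in>{..<n} - U. residual \<beta> \<sigma> i"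
  let ?P = "ising_prob n \<beta> Q \<mu> F"
  have Un: "U \<subseteq> {..<n}" using F U by auto
  have en: "\<epsilon> * n > 0" unfolding eps using g0 d n by simp
  have "spin_configs n F \<inter> {\<sigma>. \<bar>bh \<sigma> - \<beta>\<bar> > \<eta>}
      \<subseteq> {\<sigma>. quad_form \<sigma> < \<delta> * n} \<union> {\<sigma>. \<bar>?T \<sigma>\<bar> > \<epsilon> * n}"
  proof (intro subsetI)
    fix \<sigma> assume \<sigma>: "\<sigma> \<in> spin_configs n F \<inter> {\<sigma>. \<bar>bh \<sigma> - \<beta>\<bar> > \<eta>}"
    show "\<sigma> \<in> {\<sigma>. quad_form \<sigma> < \<delta> * n} \<union> {\<sigma>. \<bar>?T \<sigma>\<bar> > \<epsilon> * n}"
    proof (rule ccontr)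
      assume "\<sigma> \<notin> {\<sigma>. quad_form \<sigma> < \<delta> * n} \<union> {\<sigma>. \<bar>?T \<sigma>\<bar> > \<epsilon> * n}"
      hence "quad_form \<sigma> \<ge> \<delta> * n" "\<bar>?T \<sigma>\<bar> \<le> \<epsilon> * n" by auto
      with \<sigma> bh have "\<bar>bh \<sigma> - \<beta>\<bar> < \<eta>"
        by (intro mple_near_beta[OF n Cp bp eta d g0 g1 g2 eps Un small]) auto
      with \<sigma> show False by auto
    qed
  qed
  hence "?P {\<sigma>. \<bar>bh \<sigma> - \<beta>\<bar> > \<eta>} \<le> ?P {\<sigma>. quad_form \<sigma> < \<delta> * n} + ?P {\<sigma>. \<bar>?T \<sigma>\<bar> > \<epsilon> * n}"
    by (intro order_trans[OF ising_prob_mono ising_prob_Un_le])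
  also have "?P {\<sigma>. quad_form \<sigma> < \<delta> * n}
      \<le> exp (\<beta> / 2 * (\<delta> * n)) * 2 ^ n * exp (2 * \<beta> * C * sqrt (card U) * sqrt n)
         / ising_Z n \<beta> Q (\<lambda>_. 0)"
    using Un U bp by (intro ising_prob_le_of_weight_le[OF F] low_energy_weight_le) auto
  also have "?P {\<sigma>. \<bar>?T \<sigma>\<bar> > \<epsilon> * n} \<le> 2 * (C * n) * influence_bound \<beta> / (\<epsilon> * n)\<^sup>2"
  proof (intro ising_prob_le_of_weight_le[OF F])
    have "(\<Sum>\<sigma>\<in>spin_configs n F \<inter> {\<sigma>. \<bar>?T \<sigma>\<bar> > \<epsilon> * n}. ising_weight n \<beta> Q \<mu> \<sigma>)
        \<le> (\<Sum>\<sigma>\<in>spin_configs n F. ising_weight n \<beta> Q \<mu> \<sigma> * (?T \<sigma>)\<^sup>2) / (\<epsilon> * n)\<^sup>2"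
      using en by (intro weighted_chebyshev finite_spin_configs less_imp_le[OF ising_weight_pos])
    also have "\<dots> \<le> (\<Sum>\<sigma>\<in>spin_configs n F. ising_weight n \<beta> Q \<mu> \<sigma>)
        * (2 * (C * n) * influence_bound \<beta>) / (\<epsilon> * n)\<^sup>2"
      using U bp by (intro divide_right_mono residual_second_moment) auto
    finally show "(\<Sum>\<sigma>\<in>spin_configs n F \<inter> {\<sigma>. \<bar>?T \<sigma>\<bar> > \<epsilon> * n}. ising_weight n \<beta> Q \<mu> \<sigma>)
        \<le> 2 * (C * n) * influence_bound \<beta> / (\<epsilon> * n)\<^sup>2
          * (\<Sum>\<sigma>\<in>spin_configs n F. ising_weight n \<beta> Q \<mu> \<sigma>)"
      by (simp add: mult.commute)
  qed
  finally show ?thesis by simp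
qed

lemma mple_error_prob_explicit:
  assumes n: "n > 0" and Cp: "C > 0" and bp: "\<beta> > 0" and eta: "\<eta> > 0" and d: "\<delta> > 0"
    and g0: "\<gamma> > 0"
    and g1: "\<forall>x. \<delta> / 2 \<le> x \<and> x \<le> 4 * C\<^sup>2 / \<delta> \<longrightarrow> \<gamma> \<le> tanh ((\<beta> + \<eta>) * x) - tanh (\<beta> * x)"
    and g2: "\<forall>x. \<delta> / 2 \<le> x \<and> x \<le> 4 * C\<^sup>2 / \<delta> \<longrightarrow> \<gamma> \<le> tanh (\<beta> * x) - tanh ((\<beta> - \<eta>) * x)"
    and eps: "\<epsilon> = \<gamma> * \<delta> / 16"
    and F: "F \<subseteq> {..<n}" and U: "U = F \<union> {i. i < n \<and> \<mu> i \<noteq> 0}"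
    and sparse: "sqrt (card U) * sqrt n \<le> (v::real) * n" and v_eps: "2 * C * v \<le> \<epsilon>"
    and v_\<delta>: "8 * C * v \<le> \<delta>"
    and Z: "2 ^ n * exp (\<beta> * \<delta> * n) < ising_Z n \<beta> Q (\<lambda>_. 0)"
    and bh: "\<And>\<sigma>. (\<exists>b. pl_score n Q \<sigma> b = 0) \<Longrightarrow> pl_score n Q \<sigma> (bh \<sigma>) = 0"
  shows "ising_prob n \<beta> Q \<mu> F {\<sigma>. \<bar>bh \<sigma> - \<beta>\<bar> > \<eta>}
     \<le> exp (- (\<beta> * \<delta> / 4) * n) + 2 * C * (3 * C + 2 * \<beta> * C\<^sup>2) / \<epsilon>\<^sup>2 / sqrt n"
proof -
  have nr: "real n > 0" using n by simp
  have ep: "\<epsilon> > 0" unfolding eps using g0 d by simp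
  have small: "2 * (sqrt (card U) * (C * sqrt n)) \<le> \<epsilon> * n"
  proof -
    have "2 * (sqrt (card U) * (C * sqrt n)) = 2 * C * (sqrt (card U) * sqrt n)" by simp
    also have "\<dots> \<le> 2 * C * (v * n)" using sparse Cp by (intro mult_left_mono) auto
    also have "\<dots> \<le> \<epsilon> * n" using v_eps nr by (simp add: mult.assoc[symmetric])
    finally show ?thesis .
  qed
  define Z0 where "Z0 = ising_Z n \<beta> Q (\<lambda>_. 0)"
  have low_energy: "exp (\<beta> / 2 * (\<delta> * n)) * 2 ^ n * exp (2 * \<beta> * C * sqrt (card U) * sqrt n) / Z0
      \<le> exp (- (\<beta> * \<delta> / 4) * n)"
  proof -
    have "2 * \<beta> * C * sqrt (card U) * sqrt n \<le> 2 * \<beta> * C * (v * n)"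
      using sparse bp Cp by (simp add: mult.assoc)
    also have "\<dots> \<le> \<beta> * \<delta> * n / 4"
      using mult_right_mono[OF v_\<delta>, of "\<beta> * n / 4"] bp nr by (simp add: algebra_simps)
    finally have "exp (\<beta> / 2 * (\<delta> * n)) * 2 ^ n * exp (2 * \<beta> * C * sqrt (card U) * sqrt n)
        \<le> exp (\<beta> / 2 * (\<delta> * n)) * 2 ^ n * exp (\<beta> * \<delta> * n / 4)"
      by (intro mult_left_mono) auto
    also have "\<dots> = exp (- (\<beta> * \<delta> / 4) * n) * (2 ^ n * exp (\<beta> * \<delta> * n))"
      by (simp add: exp_add[symmetric] field_simps)
    also have "\<dots> \<le> exp (- (\<beta> * \<delta> / 4) * n) * Z0"
      using Z unfolding Z0_def by (intro mult_left_mono) auto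
    finally show ?thesis using ising_Z_pos unfolding Z0_def by (simp add: divide_le_eq)
  qed
  have fluctuation: "2 * (C * n) * influence_bound \<beta> / (\<epsilon> * n)\<^sup>2
      \<le> 2 * C * (3 * C + 2 * \<beta> * C\<^sup>2) / \<epsilon>\<^sup>2 / sqrt n"
  proof -
    have "\<beta> * C\<^sup>2 * 1 \<le> \<beta> * C\<^sup>2 * sqrt n" using n bp by (intro mult_left_mono) auto
    hence "influence_bound \<beta> \<le> (3 * C + 2 * \<beta> * C\<^sup>2) * sqrt n"
      unfolding influence_bound_def by (simp add: algebra_simps)
    hence "2 * (C * n) * influence_bound \<beta> / (\<epsilon> * n)\<^sup>2
        \<le> 2 * (C * n) * ((3 * C + 2 * \<beta> * C\<^sup>2) * sqrt n) / (\<epsilon> * n)\<^sup>2"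
      using Cp nr by (intro divide_right_mono mult_left_mono) auto
    also have "\<dots> = 2 * C * (3 * C + 2 * \<beta> * C\<^sup>2) / \<epsilon>\<^sup>2 / sqrt n"
    proof -
      define r where "r = sqrt (real n)"
      have "r > 0" "real n = r * r" unfolding r_def using nr by simp_all
      thus ?thesis unfolding r_def[symmetric] using ep by (simp add: field_simps power2_eq_square)
    qed
    finally show ?thesis .
  qed
  have "ising_prob n \<beta> Q \<mu> F {\<sigma>. \<bar>bh \<sigma> - \<beta>\<bar> > \<eta>}
     \<le> exp (\<beta> / 2 * (\<delta> * n)) * 2 ^ n * exp (2 * \<beta> * C * sqrt (card U) * sqrt n) / Z0
       + 2 * (C * n) * influence_bound \<beta> / (\<epsilon> * n)\<^sup>2"
    unfolding Z0_def using bh by (rule mple_error_prob_le[OF n Cp bp eta d g0 g1 g2 eps F U small])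
  thus ?thesis using low_energy fluctuation by linarith
qed

end

lemma eventually_gt_of_liminf_pos:
  assumes "liminf (\<lambda>n. ereal (f n)) > 0"
  obtains c :: real where "c > 0" "eventually (\<lambda>n. c < f n) sequentially"
proof -
  from ereal_dense2[OF assms] obtain z where "0 < ereal z" and z: "ereal z < liminf (\<lambda>n. ereal (f n))"
    by blast
  moreover have "eventually (\<lambda>n. ereal z < ereal (f n)) sequentially" by (rule less_LiminfD[OF z])
  ultimately show ?thesis by (intro that[of z]) auto
qed

lemma pow2_exp_less_of_ln_gt:
  fixes Z c :: real
  assumes "n > 0" "Z > 0" "c < (1 / real n) * ln (Z / 2 ^ n)"
  shows "2 ^ n * exp (c * n) < Z"
proof -
  have "c * n < ln (Z / 2 ^ n)" using assms by (simp add: field_simps)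
  hence "exp (c * n) < exp (ln (Z / 2 ^ n))" by simp
  hence "exp (c * n) < Z / 2 ^ n" using assms(2) by simp
  thus ?thesis by (simp add: field_simps)
qed

lemma SUP_tendsto_0_of_eventually_le:
  fixes f :: "nat \<Rightarrow> 'a \<Rightarrow> real"
  assumes "\<And>n. x0 n \<in> A n" "\<And>n. bdd_above (f n ` A n)" "\<And>n x. x \<in> A n \<Longrightarrow> 0 \<le> f n x"
    and "eventually (\<lambda>n. \<forall>x\<in>A n. f n x \<le> b n) sequentially" and "b \<longlonglongrightarrow> 0"
  shows "(\<lambda>n. SUP x\<in>A n. f n x) \<longlonglongrightarrow> 0"
proof (rule tendsto_sandwich[OF _ _ tendsto_const \<open>b \<longlonglongrightarrow> 0\<close>])
  show "eventually (\<lambda>n. 0 \<le> (SUP x\<in>A n. f n x)) sequentially"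
    using assms(1-3) by (intro always_eventually allI order_trans[OF _ cSUP_upper]) blast+
  show "eventually (\<lambda>n. (SUP x\<in>A n. f n x) \<le> b n) sequentially"
    using assms(4) by eventually_elim (use assms(1) in \<open>auto intro: cSUP_least\<close>)
qed

lemma sqrt_card_support_le:
  assumes "\<mu> \<in> sparse_fields n s" "n > 0"
  shows "sqrt (card (S \<union> {i. i < n \<and> \<mu> i \<noteq> 0})) * sqrt n
    \<le> sqrt ((real s + real (card S)) / n) * n"
proof -
  let ?U = "S \<union> {i. i < n \<and> \<mu> i \<noteq> 0}"
  have "card ?U \<le> card S + card {i. i < n \<and> \<mu> i \<noteq> 0}" by (rule card_Un_le)
  also have "card {i. i < n \<and> \<mu> i \<noteq> 0} \<le> s"
    using assms(1) unfolding sparse_fields_def by auto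
  finally have "real (card ?U) * real n \<le> (real s + real (card S)) / n * (real n)\<^sup>2"
    using assms(2) by (simp add: power2_eq_square)
  hence "sqrt (real (card ?U) * real n) \<le> sqrt ((real s + real (card S)) / n * (real n)\<^sup>2)"
    by (rule real_sqrt_le_mono)
  also have "\<dots> = sqrt ((real s + real (card S)) / n) * n"
    by (simp only: real_sqrt_mult real_sqrt_abs abs_of_nat)
  finally show ?thesis by (simp add: real_sqrt_mult)
qed

lemma mple_consistent_with_fixed_spins:
  fixes Q :: "nat \<Rightarrow> nat \<Rightarrow> nat \<Rightarrow> real" and s :: "nat \<Rightarrow> nat" and S1 :: "nat \<Rightarrow> nat set"
    and betahat :: "nat \<Rightarrow> (nat \<Rightarrow> real) \<Rightarrow> real"
  assumes symm: "\<And>n i j. i < n \<Longrightarrow> j < n \<Longrightarrow> Q n i j = Q n j i"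
    and diag: "\<And>n i. i < n \<Longrightarrow> Q n i i = 0"
    and opbd: "\<exists>C. \<forall>n. mat_opnorm n (Q n) \<le> C"
    and beta_pos: "\<beta> > 0"
    and high_temp_fail: "liminf (\<lambda>n. ereal ((1 / real n) * ln (ising_Z n \<beta> (Q n) (\<lambda>_. 0) / 2 ^ n))) > 0"
    and mple: "\<And>n \<sigma>. (\<exists>b. pl_score n (Q n) \<sigma> b = 0) \<Longrightarrow> pl_score n (Q n) \<sigma> (betahat n \<sigma>) = 0"
    and s_small: "(\<lambda>n. real (s n) / real n) \<longlonglongrightarrow> 0"
    and S1_sub: "\<And>n. S1 n \<subseteq> {..<n}"
    and S1_small: "(\<lambda>n. real (card (S1 n)) / real n) \<longlonglongrightarrow> 0"
    and eta: "\<eta> > 0"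
  shows "(\<lambda>n. SUP \<mu>\<in>sparse_fields n (s n).
             ising_prob n \<beta> (Q n) \<mu> (S1 n) {\<sigma>. \<bar>betahat n \<sigma> - \<beta>\<bar> > \<eta>}) \<longlonglongrightarrow> 0"
proof -
  obtain C0 where C0: "\<forall>n. mat_opnorm n (Q n) \<le> C0" using opbd by blast
  define C where "C = max C0 1"
  have Cp: "C > 0" unfolding C_def by simp
  have coupling: "bounded_coupling n (Q n) C" for n
    by unfold_locales (use symm diag C0 in \<open>auto simp: C_def intro: order_trans\<close>)
  obtain c where cp: "c > 0"
    and free_energy: "eventually (\<lambda>n. c < (1 / real n) * ln (ising_Z n \<beta> (Q n) (\<lambda>_. 0) / 2 ^ n))
        sequentially"
    using eventually_gt_of_liminf_pos[OF high_temp_fail] by blast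
  define \<delta> where "\<delta> = c / \<beta>"
  have dp: "\<delta> > 0" and c: "c = \<beta> * \<delta>" unfolding \<delta>_def using cp beta_pos by simp_all
  obtain \<gamma> where gp: "\<gamma> > 0"
    and g1: "\<forall>x. \<delta> / 2 \<le> x \<and> x \<le> 4 * C\<^sup>2 / \<delta> \<longrightarrow> \<gamma> \<le> tanh ((\<beta> + \<eta>) * x) - tanh (\<beta> * x)"
    and g2: "\<forall>x. \<delta> / 2 \<le> x \<and> x \<le> 4 * C\<^sup>2 / \<delta> \<longrightarrow> \<gamma> \<le> tanh (\<beta> * x) - tanh ((\<beta> - \<eta>) * x)"
    using tanh_gap_two_sided[OF eta, of "\<delta> / 2" "4 * C\<^sup>2 / \<delta>" \<beta>] dp by auto
  define \<epsilon> where "\<epsilon> = \<gamma> * \<delta> / 16"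
  have ep: "\<epsilon> > 0" unfolding \<epsilon>_def using gp dp by simp
  define v where "v n = sqrt ((real (s n) + real (card (S1 n))) / real n)" for n
  have "v \<longlonglongrightarrow> sqrt (0 + 0)"
    unfolding v_def add_divide_distrib by (intro tendsto_real_sqrt tendsto_add s_small S1_small)
  hence v0: "v \<longlonglongrightarrow> 0" by simp
  have "eventually (\<lambda>n. v n < \<epsilon> / (2 * C)) sequentially"
    using Cp ep by (intro order_tendstoD(2)[OF v0]) simp
  moreover have "eventually (\<lambda>n. v n < \<delta> / (8 * C)) sequentially"
    using Cp dp by (intro order_tendstoD(2)[OF v0]) simp
  ultimately have "eventually (\<lambda>n. 2 * C * v n \<le> \<epsilon> \<and> 8 * C * v n \<le> \<delta>) sequentially"
    by eventually_elim (use Cp in \<open>simp add: field_simps\<close>)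
  define K where "K = 2 * C * (3 * C + 2 * \<beta> * C\<^sup>2) / \<epsilon>\<^sup>2"
  show ?thesis
  proof (rule SUP_tendsto_0_of_eventually_le)
    show "(\<lambda>n. exp (- (\<beta> * \<delta> / 4) * n) + K / sqrt n) \<longlonglongrightarrow> 0"
      using beta_pos dp by real_asymp
    show "eventually (\<lambda>n. \<forall>\<mu>\<in>sparse_fields n (s n).
        ising_prob n \<beta> (Q n) \<mu> (S1 n) {\<sigma>. \<bar>betahat n \<sigma> - \<beta>\<bar> > \<eta>}
          \<le> exp (- (\<beta> * \<delta> / 4) * n) + K / sqrt n) sequentially"
      using free_energy \<open>eventually (\<lambda>n. 2 * C * v n \<le> \<epsilon> \<and> _) _\<close> eventually_gt_at_top[of 0]
    proof eventually_elim
      case (elim n)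
      show ?case
      proof
        fix \<mu> assume \<mu>: "\<mu> \<in> sparse_fields n (s n)"
        define U where "U = S1 n \<union> {i. i < n \<and> \<mu> i \<noteq> 0}"
        have sparse: "sqrt (card U) * sqrt n \<le> v n * n"
          unfolding U_def v_def using sqrt_card_support_le[OF \<mu>] elim by simp
        have Z: "2 ^ n * exp (\<beta> * \<delta> * n) < ising_Z n \<beta> (Q n) (\<lambda>_. 0)"
          using pow2_exp_less_of_ln_gt[OF _ ising_Z_pos] elim unfolding c by blast
        show "ising_prob n \<beta> (Q n) \<mu> (S1 n) {\<sigma>. \<bar>betahat n \<sigma> - \<beta>\<bar> > \<eta>}
            \<le> exp (- (\<beta> * \<delta> / 4) * n) + K / sqrt n"
          unfolding K_def
          using bounded_coupling.mple_error_prob_explicit[OF coupling[of n] _ Cp beta_pos eta dp gp g1 g2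
              \<epsilon>_def S1_sub U_def sparse _ _ Z mple] elim by auto
      qed
    qed
  qed (auto intro!: bdd_aboveI2 zero_in_sparse_fields ising_prob_nonneg ising_prob_le_1)
qed

theorem mainTheorem17:
  fixes Q :: "nat \<Rightarrow> nat \<Rightarrow> nat \<Rightarrow> real"
    and \<beta> :: real
    and s :: "nat \<Rightarrow> nat"
    and betahat :: "nat \<Rightarrow> (nat \<Rightarrow> real) \<Rightarrow> real"
  assumes symm: "\<And>n i j. i < n \<Longrightarrow> j < n \<Longrightarrow> Q n i j = Q n j i"
    and diag: "\<And>n i. i < n \<Longrightarrow> Q n i i = 0"
    and opbd: "\<exists>C. \<forall>n. mat_opnorm n (Q n) \<le> C"
    and beta_pos: "\<beta> > 0"
    and high_temp_fail: "liminf (\<lambda>n. ereal ((1 / real n) * ln (ising_Z n \<beta> (Q n) (\<lambda>_. 0) / 2 ^ n))) > 0"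
    and mple: "\<And>n \<sigma>. (\<exists>b. pl_score n (Q n) \<sigma> b = 0) \<Longrightarrow> pl_score n (Q n) \<sigma> (betahat n \<sigma>) = 0"
    and s_small: "(\<lambda>n. real (s n) / real n) \<longlonglongrightarrow> 0"
  shows "(\<forall>\<eta>>0. (\<lambda>n. SUP \<mu>\<in>sparse_fields n (s n).
             ising_prob n \<beta> (Q n) \<mu> {} {\<sigma>. \<bar>betahat n \<sigma> - \<beta>\<bar> > \<eta>}) \<longlonglongrightarrow> 0)
       \<and> (\<forall>S1 :: nat \<Rightarrow> nat set. (\<forall>n. S1 n \<subseteq> {0..<n}) \<longrightarrow>
             (\<lambda>n. real (card (S1 n)) / real n) \<longlonglongrightarrow> 0 \<longrightarrow>
           (\<forall>\<eta>>0. (\<lambda>n. SUP \<mu>\<in>sparse_fields n (s n).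
             ising_prob n \<beta> (Q n) \<mu> (S1 n) {\<sigma>. \<bar>betahat n \<sigma> - \<beta>\<bar> > \<eta>}) \<longlonglongrightarrow> 0))"
proof (intro conjI allI impI)
  fix \<eta> :: real assume "\<eta> > 0"
  then have "(\<lambda>n. SUP \<mu>\<in>sparse_fields n (s n).
      ising_prob n \<beta> (Q n) \<mu> ((\<lambda>_. {}) n) {\<sigma>. \<bar>betahat n \<sigma> - \<beta>\<bar> > \<eta>}) \<longlonglongrightarrow> 0"
    by (intro mple_consistent_with_fixed_spins[OF symm diag opbd beta_pos high_temp_fail mple s_small])
       auto
  then show "(\<lambda>n. SUP \<mu>\<in>sparse_fields n (s n).
      ising_prob n \<beta> (Q n) \<mu> {} {\<sigma>. \<bar>betahat n \<sigma> - \<beta>\<bar> > \<eta>}) \<longlonglongrightarrow> 0"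
    by simp
next
  fix S1 :: "nat \<Rightarrow> nat set" and \<eta> :: real
  assume "\<forall>n. S1 n \<subseteq> {0..<n}" "(\<lambda>n. real (card (S1 n)) / real n) \<longlonglongrightarrow> 0" "\<eta> > 0"
  then show "(\<lambda>n. SUP \<mu>\<in>sparse_fields n (s n).
      ising_prob n \<beta> (Q n) \<mu> (S1 n) {\<sigma>. \<bar>betahat n \<sigma> - \<beta>\<bar> > \<eta>}) \<longlonglongrightarrow> 0"
    by (intro mple_consistent_with_fixed_spins[OF symm diag opbd beta_pos high_temp_fail mple s_small])
       (auto simp: atLeast0LessThan)
qed

end
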